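(* Let $\mathcal G$ be a braided stability groupoid, $R$ a commutative ring, $N\in\mathbb N$, $k,a\in\mathbb N$, and assume H3($N$): $\widetilde H_i(R\mathrm{Hom}(0,-))_n=0$ for all $-1\le i<N$ and all $n>k\cdot i+a$. Let $m\in\mathbb N$ and let $W_m$ be an $RG_m$-module. Then $\widetilde H_i(R\mathrm{Hom}(m,-)\otimes_{RG_m}W_m)_n=0$ for all $-1\le i<N$ and all $n>k\cdot i+a+m$.
   Context: Stability groupoid: monoidal groupoid $(\mathcal G,\oplus,0)$ with objects $(\mathbb N,+,0)$, $G_n=\mathrm{Aut}(n)$, $\oplus\colon G_m\times G_n\to G_{m+n}$ injective, $G_0$ trivial, $(G_{l+m}\times1)\cap(1\times G_{m+n})=1\times G_m\times1$ in $G_{l+m+n}$; braided: with braiding $b_{m,n}\in G_{m+n}$. $U\mathcal G$: objects $\mathbb N$, $\mathrm{Hom}(m,n)=G_n/G_{n-m}$ for $m\le n$ ($G_{n-m}\subset G_n$ via $g\mapsto g\oplus\mathrm{id}_m$), empty otherwise, composition $fG_l\circ gG_m=f(\mathrm{id}_l\oplus g)G_{l+m}$, monoidal via $f_1G_{m_1}\oplus f_2G_{m_2}=(f_1\oplus f_2)(\mathrm{id}_{m_1}\oplus b^{-1}_{n_1,m_2}\oplus\mathrm{id}_{n_2})G_{m_1+m_2}$; $0$ initial, $\iota_n\colon0\to n$. $G_m=\mathrm{Aut}_{U\mathcal G}(m)$ acts on $R\mathrm{Hom}(m,-)$ from the right by precomposition, making $R\mathrm{Hom}(m,-)\otimes_{RG_m}W_m$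 a functor $U\mathcal G\to R\text{-Mod}$. For such a functor $V$ with $V_n=V(n)$, $\widetilde H_i(V)_n$ ($i\ge-1$) is the homology of $\widetilde C_p(V)_n=RG_n\otimes_{RG_{n-p-1}}V_{n-p-1}$ ($p\ge-1$, zero for $n<p+1$, $G_{n-p-1}\subset G_n$ via $g\mapsto g\oplus\mathrm{id}_{p+1}$) with differential $\sum_{i=0}^p(-1)^id_i$, $d_i(g\otimes v)=g(\mathrm{id}_{n-p-1}\oplus b_{1,i}\oplus\mathrm{id}_{p-i})\otimes V(\mathrm{id}_{n-p-1}\oplus\iota_1)(v)$. *)

theory Defs
  imports "HOL-Algebra.Group" "HOL-Library.Poly_Mapping"
begin

text \<open>G n is the group Aut(n); s m n g h is g (+) h in G (m+n); b m n is the braiding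
  b_{m,n} in G (m+n). The monoidal structure is taken to be strict (objects are the monoid
  (N,+,0), so (+) is associative and unital on the nose). Composition in the groupoid is the
  group multiplication (f o g = f * g).\<close>

definition stability_groupoid :: "(nat \<Rightarrow> 'g monoid) \<Rightarrow> (nat \<Rightarrow> nat \<Rightarrow> 'g \<Rightarrow> 'g \<Rightarrow> 'g) \<Rightarrow> bool" where
  "stability_groupoid G s \<longleftrightarrow>
     (\<forall>n. group (G n)) \<and>
     (\<forall>m n g h. g \<in> carrier (G m) \<and> h \<in> carrier (G n) \<longrightarrow> s m n g h \<in> carrier (G (m+n))) \<and>
     (\<forall>m n g g' h h'. g \<in> carrier (G m) \<and> g' \<in> carrier (G m) \<and> h \<in> carrier (G n) \<and> h' \<in> carrier (G n) \<longrightarrow>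
        s m n (g \<otimes>\<^bsub>G m\<^esub> g') (h \<otimes>\<^bsub>G n\<^esub> h') = s m n g h \<otimes>\<^bsub>G (m+n)\<^esub> s m n g' h') \<and>
     (\<forall>m n. inj_on (\<lambda>(g,h). s m n g h) (carrier (G m) \<times> carrier (G n))) \<and>
     carrier (G 0) = {\<one>\<^bsub>G 0\<^esub>} \<and>
     (\<forall>l m n f g h. f \<in> carrier (G l) \<and> g \<in> carrier (G m) \<and> h \<in> carrier (G n) \<longrightarrow>
        s (l+m) n (s l m f g) h = s l (m+n) f (s m n g h)) \<and>
     (\<forall>n h. h \<in> carrier (G n) \<longrightarrow> s 0 n \<one>\<^bsub>G 0\<^esub> h = h) \<and>
     (\<forall>m g. g \<in> carrier (G m) \<longrightarrow> s m 0 g \<one>\<^bsub>G 0\<^esub> = g) \<and>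
     (\<forall>l m n. (\<lambda>g. s (l+m) n g \<one>\<^bsub>G n\<^esub>) ` carrier (G (l+m))
               \<inter> (\<lambda>h. s l (m+n) \<one>\<^bsub>G l\<^esub> h) ` carrier (G (m+n))
             = (\<lambda>g. s l (m+n) \<one>\<^bsub>G l\<^esub> (s m n g \<one>\<^bsub>G n\<^esub>)) ` carrier (G m))"

definition braided_stability_groupoid ::
  "(nat \<Rightarrow> 'g monoid) \<Rightarrow> (nat \<Rightarrow> nat \<Rightarrow> 'g \<Rightarrow> 'g \<Rightarrow> 'g) \<Rightarrow> (nat \<Rightarrow> nat \<Rightarrow> 'g) \<Rightarrow> bool" where
  "braided_stability_groupoid G s b \<longleftrightarrow>
     stability_groupoid G s \<and>
     (\<forall>m n. b m n \<in> carrier (G (m+n))) \<and>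
     (\<forall>m n g h. g \<in> carrier (G m) \<and> h \<in> carrier (G n) \<longrightarrow>
        b m n \<otimes>\<^bsub>G (m+n)\<^esub> s m n g h = s n m h g \<otimes>\<^bsub>G (m+n)\<^esub> b m n) \<and>
     (\<forall>l m n. b l (m+n) =
        s m (l+n) \<one>\<^bsub>G m\<^esub> (b l n) \<otimes>\<^bsub>G (l+m+n)\<^esub> s (l+m) n (b l m) \<one>\<^bsub>G n\<^esub>) \<and>
     (\<forall>l m n. b (l+m) n =
        s (l+n) m (b l n) \<one>\<^bsub>G m\<^esub> \<otimes>\<^bsub>G (l+m+n)\<^esub> s l (m+n) \<one>\<^bsub>G l\<^esub> (b m n))"

definition smul :: "'r::comm_ring_1 \<Rightarrow> ('x \<Rightarrow>\<^sub>0 'r) \<Rightarrow> ('x \<Rightarrow>\<^sub>0 'r)" where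
  "smul c x = Poly_Mapping.map (\<lambda>a. c * a) x"

definition gen :: "'x \<Rightarrow> ('x \<Rightarrow>\<^sub>0 'r::comm_ring_1)" where
  "gen a = Poly_Mapping.single a 1"

definition lin_ext :: "('x \<Rightarrow> ('y \<Rightarrow>\<^sub>0 'r::comm_ring_1)) \<Rightarrow> ('x \<Rightarrow>\<^sub>0 'r) \<Rightarrow> ('y \<Rightarrow>\<^sub>0 'r)" where
  "lin_ext \<phi> x = (\<Sum>a\<in>Poly_Mapping.keys x. smul (Poly_Mapping.lookup x a) (\<phi> a))"

definition free_on :: "'x set \<Rightarrow> ('x \<Rightarrow>\<^sub>0 'r::comm_ring_1) set" where
  "free_on X = {x. Poly_Mapping.keys x \<subseteq> X}"

inductive_set rspan :: "('x \<Rightarrow>\<^sub>0 'r::comm_ring_1) set \<Rightarrow> ('x \<Rightarrow>\<^sub>0 'r) set" for S where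
  rspan_zero: "0 \<in> rspan S"
| rspan_gen: "x \<in> S \<Longrightarrow> x \<in> rspan S"
| rspan_add: "x \<in> rspan S \<Longrightarrow> y \<in> rspan S \<Longrightarrow> x + y \<in> rspan S"
| rspan_smul: "x \<in> rspan S \<Longrightarrow> smul c x \<in> rspan S"

text \<open>V_j = R[X j] / span(K j); G_j acts on the generators via act j;
  V(id_j (+) iota_1) : V_j -> V_{j+1} is induced by iota j on generators.
  Index q = p+1 >= 0. C~_p(V)_n = RG_n \<otimes>_{RG_{n-q}} V_{n-q} (zero if q > n) is presented as
  the free R-module on G_n \<times> X (n-q) modulo the balancing relations (g t, x) ~ (g, t x)
  (t in G_{n-q} embedded as t (+) id_q) and g \<otimes> K (n-q).\<close>

definition ctil_gens :: "(nat \<Rightarrow> 'g monoid) \<Rightarrow> (nat \<Rightarrow> 'x set) \<Rightarrow> nat \<Rightarrow> nat \<Rightarrow> ('g \<times> 'x) set" where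
  "ctil_gens G X n q = {(g,x). q \<le> n \<and> g \<in> carrier (G n) \<and> x \<in> X (n-q)}"

definition ctil_rels :: "(nat \<Rightarrow> 'g monoid) \<Rightarrow> (nat \<Rightarrow> nat \<Rightarrow> 'g \<Rightarrow> 'g \<Rightarrow> 'g) \<Rightarrow> (nat \<Rightarrow> 'x set)
    \<Rightarrow> (nat \<Rightarrow> ('x \<Rightarrow>\<^sub>0 'r::comm_ring_1) set) \<Rightarrow> (nat \<Rightarrow> 'g \<Rightarrow> 'x \<Rightarrow> 'x) \<Rightarrow> nat \<Rightarrow> nat
    \<Rightarrow> ('g \<times> 'x \<Rightarrow>\<^sub>0 'r) set" where
  "ctil_rels G s X K act n q = rspan
     ({gen (g \<otimes>\<^bsub>G n\<^esub> s (n-q) q t \<one>\<^bsub>G q\<^esub>, x) - gen (g, act (n-q) t x) | g t x.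
         q \<le> n \<and> g \<in> carrier (G n) \<and> t \<in> carrier (G (n-q)) \<and> x \<in> X (n-q)}
      \<union> {lin_ext (\<lambda>x. gen (g,x)) k | g k. q \<le> n \<and> g \<in> carrier (G n) \<and> k \<in> K (n-q)})"

definition ctil_face :: "(nat \<Rightarrow> 'g monoid) \<Rightarrow> (nat \<Rightarrow> nat \<Rightarrow> 'g \<Rightarrow> 'g \<Rightarrow> 'g) \<Rightarrow> (nat \<Rightarrow> nat \<Rightarrow> 'g)
    \<Rightarrow> nat \<Rightarrow> nat \<Rightarrow> nat \<Rightarrow> 'g" where
  "ctil_face G s b n q t =
     s (n-q) q \<one>\<^bsub>G (n-q)\<^esub> (s (Suc t) (q - Suc t) (b 1 t) \<one>\<^bsub>G (q - Suc t)\<^esub>)"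

definition ctil_d :: "(nat \<Rightarrow> 'g monoid) \<Rightarrow> (nat \<Rightarrow> nat \<Rightarrow> 'g \<Rightarrow> 'g \<Rightarrow> 'g) \<Rightarrow> (nat \<Rightarrow> nat \<Rightarrow> 'g)
    \<Rightarrow> (nat \<Rightarrow> 'x \<Rightarrow> 'x) \<Rightarrow> nat \<Rightarrow> nat \<Rightarrow> ('g \<times> 'x \<Rightarrow>\<^sub>0 'r::comm_ring_1) \<Rightarrow> ('g \<times> 'x \<Rightarrow>\<^sub>0 'r)" where
  "ctil_d G s b iota n q = lin_ext (\<lambda>(g,x). \<Sum>t<q.
       smul ((-1)^t) (gen (g \<otimes>\<^bsub>G n\<^esub> ctil_face G s b n q t, iota (n-q) x)))"

text \<open>H~_i(V)_n = 0 (i >= -1): every cycle in C~_i (class of x with d x = 0 in the quotient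
  C~_{i-1}) is a boundary (x - d y lies in the relation submodule of C~_i).\<close>
definition ctil_H_vanishes :: "(nat \<Rightarrow> 'g monoid) \<Rightarrow> (nat \<Rightarrow> nat \<Rightarrow> 'g \<Rightarrow> 'g \<Rightarrow> 'g) \<Rightarrow> (nat \<Rightarrow> nat \<Rightarrow> 'g)
    \<Rightarrow> (nat \<Rightarrow> 'x set) \<Rightarrow> (nat \<Rightarrow> ('x \<Rightarrow>\<^sub>0 'r::comm_ring_1) set) \<Rightarrow> (nat \<Rightarrow> 'g \<Rightarrow> 'x \<Rightarrow> 'x)
    \<Rightarrow> (nat \<Rightarrow> 'x \<Rightarrow> 'x) \<Rightarrow> int \<Rightarrow> nat \<Rightarrow> bool" where
  "ctil_H_vanishes G s b X K act iota i n \<longleftrightarrow>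
     (\<forall>x \<in> free_on (ctil_gens G X n (nat (i+1))).
        (nat (i+1) = 0 \<or> ctil_d G s b iota n (nat (i+1)) x \<in> ctil_rels G s X K act n (nat (i+1) - 1))
        \<longrightarrow> (\<exists>y \<in> free_on (ctil_gens G X n (Suc (nat (i+1)))).
               x - ctil_d G s b iota n (Suc (nat (i+1))) y \<in> ctil_rels G s X K act n (nat (i+1))))"

definition RG_module :: "'g monoid \<Rightarrow> ('r::comm_ring_1 \<Rightarrow> 'w::ab_group_add \<Rightarrow> 'w) \<Rightarrow> ('g \<Rightarrow> 'w \<Rightarrow> 'w) \<Rightarrow> bool" where
  "RG_module H sm act \<longleftrightarrow>
     (\<forall>c w w'. sm c (w + w') = sm c w + sm c w') \<and>
     (\<forall>c c' w. sm (c + c') w = sm c w + sm c' w) \<and>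
     (\<forall>c c' w. sm (c * c') w = sm c (sm c' w)) \<and>
     (\<forall>w. sm 1 w = w) \<and>
     (\<forall>h\<in>carrier H. \<forall>w w'. act h (w + w') = act h w + act h w') \<and>
     (\<forall>h\<in>carrier H. \<forall>c w. act h (sm c w) = sm c (act h w)) \<and>
     (\<forall>w. act \<one>\<^bsub>H\<^esub> w = w) \<and>
     (\<forall>h\<in>carrier H. \<forall>h'\<in>carrier H. \<forall>w. act (h \<otimes>\<^bsub>H\<^esub> h') w = act h (act h' w))"

text \<open>R Hom(m,j) \<otimes>_{RG_m} W: generators (f,w) with f in G_j representing f G_{j-m} (empty if j<m);
  relations: R-bilinearity in w, f k ~ f for k in G_{j-m} (embedded k (+) id_m), and
  (f (id_{j-m} (+) h), w) ~ (f, h w) for h in G_m (right action by precomposition).\<close>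

definition homW_gens :: "(nat \<Rightarrow> 'g monoid) \<Rightarrow> nat \<Rightarrow> nat \<Rightarrow> ('g \<times> 'w) set" where
  "homW_gens G m j = {(f,w). m \<le> j \<and> f \<in> carrier (G j)}"

definition homW_rels :: "(nat \<Rightarrow> 'g monoid) \<Rightarrow> (nat \<Rightarrow> nat \<Rightarrow> 'g \<Rightarrow> 'g \<Rightarrow> 'g)
    \<Rightarrow> ('r::comm_ring_1 \<Rightarrow> 'w::ab_group_add \<Rightarrow> 'w) \<Rightarrow> ('g \<Rightarrow> 'w \<Rightarrow> 'w) \<Rightarrow> nat \<Rightarrow> nat
    \<Rightarrow> ('g \<times> 'w \<Rightarrow>\<^sub>0 'r) set" where
  "homW_rels G s sm actW m j = (if m \<le> j then
       {gen (f, w + w') - gen (f, w) - gen (f, w') | f w w'. f \<in> carrier (G j)}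
     \<union> {gen (f, sm c w) - smul c (gen (f, w)) | f c w. f \<in> carrier (G j)}
     \<union> {gen (f \<otimes>\<^bsub>G j\<^esub> s (j-m) m k \<one>\<^bsub>G m\<^esub>, w) - gen (f, w) | f k w.
           f \<in> carrier (G j) \<and> k \<in> carrier (G (j-m))}
     \<union> {gen (f \<otimes>\<^bsub>G j\<^esub> s (j-m) m \<one>\<^bsub>G (j-m)\<^esub> h, w) - gen (f, actW h w) | f h w.
           f \<in> carrier (G j) \<and> h \<in> carrier (G m)}
     else {})"

definition homW_act :: "(nat \<Rightarrow> 'g monoid) \<Rightarrow> nat \<Rightarrow> 'g \<Rightarrow> ('g \<times> 'w) \<Rightarrow> ('g \<times> 'w)" where
  "homW_act G j t fw = (t \<otimes>\<^bsub>G j\<^esub> fst fw, snd fw)"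

text \<open>id_j (+) iota_1 = b_{j,1}^{-1} G_1 in Hom(j,j+1) (by the formula for (+) on UG);
  postcomposition: f G_{j-m} |-> b_{j,1}^{-1} (id_1 (+) f) G_{j+1-m}.\<close>
definition homW_iota :: "(nat \<Rightarrow> 'g monoid) \<Rightarrow> (nat \<Rightarrow> nat \<Rightarrow> 'g \<Rightarrow> 'g \<Rightarrow> 'g) \<Rightarrow> (nat \<Rightarrow> nat \<Rightarrow> 'g)
    \<Rightarrow> nat \<Rightarrow> ('g \<times> 'w) \<Rightarrow> ('g \<times> 'w)" where
  "homW_iota G s b j fw =
     (inv\<^bsub>G (Suc j)\<^esub> (b j 1) \<otimes>\<^bsub>G (Suc j)\<^esub> s 1 j \<one>\<^bsub>G 1\<^esub> (fst fw), snd fw)"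

end

theory Submission
  imports Defs "HOL-Algebra.Coset"
begin

text \<open>Put \<nu> = n - m. The complex C~(R Hom(0,-))_\<nu> consists of free R-modules on the coset
  spaces G_\<nu>/G_(\<nu>-q), so vanishing of its homology below degree L lets one choose, degree by
  degree, a contracting homotopy \<phi> (d\<phi> + \<phi>d = id), each component being defined on coset
  representatives. For V = R Hom(m,-) \<otimes> W, a generator g \<otimes> (f \<otimes> w) of C~_(q-1)(V)_n equals
  \<alpha>(v \<oplus> h)Q_q \<otimes> (id \<otimes> w), where Q_q = id \<oplus> b_(m,q) braids the m strands of Hom(m,-)
  past the q strands of the simplex and \<alpha>(v \<oplus> h) is the decomposition of g(f \<oplus> id)Q_q^-1
  along a fixed set of representatives of G_n/(G_(n-m) \<times> G_m). For fixed \<alpha>, h and w the map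
  v \<mapsto> \<alpha>(v \<oplus> h)Q_q \<otimes> (id \<otimes> w) is a chain map C~(R Hom(0,-))_(n-m) \<rightarrow> C~(V)_n, by the
  hexagon identities and naturality of the braiding, and transporting \<phi> along these maps
  contracts C~(V)_n in the same range of degrees.\<close>

section \<open>Free modules\<close>

lemma lookup_smul[simp]: "Poly_Mapping.lookup (smul c x) k = c * Poly_Mapping.lookup x k"
  by (simp add: smul_def map.rep_eq when_def)

lemma smul_add: "smul c (x + y) = smul c x + smul c y"
  by (rule poly_mapping_eqI) (simp add: lookup_add algebra_simps)
lemma smul_add2: "smul (c + d) x = smul c x + smul d x"
  by (rule poly_mapping_eqI) (simp add: lookup_add algebra_simps)
lemma smul_smul: "smul c (smul d x) = smul (c*d) x"
  by (rule poly_mapping_eqI) (simp add: algebra_simps)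
lemma smul_one[simp]: "smul 1 x = x"
  by (rule poly_mapping_eqI) simp
lemma smul_zero[simp]: "smul 0 x = 0"
  by (rule poly_mapping_eqI) simp
lemma smul_zero2[simp]: "smul c 0 = 0"
  by (rule poly_mapping_eqI) simp
lemma smul_minus_one: "smul (-1) x = - x"
  by (rule poly_mapping_eqI) (simp add: lookup_minus)
lemma smul_neg: "smul (- c) x = - smul c x"
  by (rule poly_mapping_eqI) simp
lemma smul_diff: "smul c (x - y) = smul c x - smul c y"
  by (rule poly_mapping_eqI) (simp add: lookup_minus algebra_simps)
lemma smul_sum: "smul c (sum f A) = sum (\<lambda>a. smul c (f a)) A"
  by (induct A rule: infinite_finite_induct) (auto simp: smul_add)
lemma keys_smul: "Poly_Mapping.keys (smul c x) \<subseteq> Poly_Mapping.keys x"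
  by (auto simp: in_keys_iff)

lemma lookup_gen: "Poly_Mapping.lookup (gen a) k = (if k = a then 1 else 0)"
  by (simp add: gen_def lookup_single when_def)
lemma keys_gen: "Poly_Mapping.keys (gen a :: _ \<Rightarrow>\<^sub>0 'r::comm_ring_1) = {a}"
  by (simp add: gen_def)

lemma lin_ext_superset:
  assumes "finite S" "Poly_Mapping.keys x \<subseteq> S"
  shows "lin_ext \<phi> x = (\<Sum>a\<in>S. smul (Poly_Mapping.lookup x a) (\<phi> a))"
  unfolding lin_ext_def
  by (rule sum.mono_neutral_left) (use assms in \<open>auto simp: in_keys_iff\<close>)

lemma lin_ext_add: "lin_ext \<phi> (x + y) = lin_ext \<phi> x + lin_ext \<phi> y"
proof -
  let ?S = "Poly_Mapping.keys x \<union> Poly_Mapping.keys y"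
  have k: "Poly_Mapping.keys (x+y) \<subseteq> ?S" by (rule keys_add)
  show ?thesis
    by (subst (1 2 3) lin_ext_superset[of ?S]) (auto simp: k lookup_add smul_add2 sum.distrib)
qed

lemma lin_ext_zero[simp]: "lin_ext \<phi> 0 = 0"
  by (simp add: lin_ext_def)

lemma lin_ext_smul: "lin_ext \<phi> (smul c x) = smul c (lin_ext \<phi> x)"
  by (subst (1 2) lin_ext_superset[of "Poly_Mapping.keys x"])
     (auto simp: keys_smul smul_smul smul_sum)

lemma lin_ext_uminus: "lin_ext \<phi> (- x) = - lin_ext \<phi> x"
  using lin_ext_smul[of \<phi> "-1" x] by (simp add: smul_minus_one)

lemma lin_ext_diff: "lin_ext \<phi> (x - y) = lin_ext \<phi> x - lin_ext \<phi> y"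
  using lin_ext_add[of \<phi> x "-y"] by (simp add: lin_ext_uminus)

lemma lin_ext_sum: "lin_ext \<phi> (sum f A) = sum (\<lambda>a. lin_ext \<phi> (f a)) A"
  by (induct A rule: infinite_finite_induct) (auto simp: lin_ext_add)

lemma lin_ext_gen[simp]: "lin_ext \<phi> (gen a) = \<phi> a"
  by (simp add: lin_ext_def keys_gen lookup_gen)

lemma lin_ext_cong: "(\<And>a. a \<in> Poly_Mapping.keys x \<Longrightarrow> \<phi> a = \<psi> a) \<Longrightarrow> lin_ext \<phi> x = lin_ext \<psi> x"
  by (simp add: lin_ext_def)

lemma lin_ext_comp: "lin_ext \<psi> (lin_ext \<phi> x) = lin_ext (\<lambda>a. lin_ext \<psi> (\<phi> a)) x"
  unfolding lin_ext_def[of \<phi> x] lin_ext_def[of "\<lambda>a. lin_ext \<psi> (\<phi> a)" x]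
  by (simp add: lin_ext_sum lin_ext_smul)

lemma lin_ext_linear_comb:
  "lin_ext \<phi> x + lin_ext \<psi> x = lin_ext (\<lambda>a. \<phi> a + \<psi> a) x"
  "lin_ext \<phi> x - lin_ext \<psi> x = lin_ext (\<lambda>a. \<phi> a - \<psi> a) x"
  by (simp_all add: lin_ext_def smul_add smul_diff sum.distrib sum_subtractf)

lemma lin_ext_gen_id: "lin_ext gen x = x"
proof (rule poly_mapping_eqI)
  fix k
  have "Poly_Mapping.lookup (lin_ext gen x) k =
    (\<Sum>a\<in>Poly_Mapping.keys x. Poly_Mapping.lookup x a * (if k = a then 1 else 0))"
    by (simp add: lin_ext_def lookup_sum lookup_gen)
  also have "\<dots> = Poly_Mapping.lookup x k"
    by (simp add: if_distrib[where f="\<lambda>v. _ * v"] cong: if_cong)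
       (auto simp: in_keys_iff)
  finally show "Poly_Mapping.lookup (lin_ext gen x) k = Poly_Mapping.lookup x k" .
qed

lemma rspan_diff: "x \<in> rspan S \<Longrightarrow> y \<in> rspan S \<Longrightarrow> x - y \<in> rspan S"
  using rspan_add[of x S "smul (-1) y"] rspan_smul[of y S "-1"] by (simp add: smul_minus_one)
lemma rspan_uminus: "x \<in> rspan S \<Longrightarrow> - x \<in> rspan S"
  using rspan_smul[of x S "-1"] by (simp add: smul_minus_one)
lemma rspan_sum: "(\<And>a. a \<in> A \<Longrightarrow> f a \<in> rspan S) \<Longrightarrow> sum f A \<in> rspan S"
  by (induct A rule: infinite_finite_induct) (auto intro: rspan.intros)

lemma lin_ext_rspan: "(\<And>a. a \<in> Poly_Mapping.keys x \<Longrightarrow> \<phi> a \<in> rspan S) \<Longrightarrow> lin_ext \<phi> x \<in> rspan S"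
  unfolding lin_ext_def by (rule rspan_sum) (auto intro: rspan.intros)

lemma lin_ext_rspan_map:
  assumes "\<And>y. y \<in> T \<Longrightarrow> lin_ext \<phi> y \<in> rspan S" "x \<in> rspan T"
  shows "lin_ext \<phi> x \<in> rspan S"
  using assms(2) by induct (auto intro: rspan.intros assms(1) simp: lin_ext_add lin_ext_smul)

lemma lin_ext_rspan_zero:
  assumes "\<And>y. y \<in> T \<Longrightarrow> lin_ext \<phi> y = 0" "x \<in> rspan T"
  shows "lin_ext \<phi> x = 0"
  using assms(2) by induct (auto simp: assms(1) lin_ext_add lin_ext_smul)

lemma free_on_gen: "a \<in> X \<Longrightarrow> gen a \<in> free_on X"
  by (simp add: free_on_def keys_gen)
lemma free_on_zero[simp]: "0 \<in> free_on X"
  by (simp add: free_on_def)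
lemma free_on_add: "x \<in> free_on X \<Longrightarrow> y \<in> free_on X \<Longrightarrow> x + y \<in> free_on X"
  using keys_add[of x y] by (auto simp: free_on_def)
lemma free_on_smul: "x \<in> free_on X \<Longrightarrow> smul c x \<in> free_on X"
  using keys_smul[of c x] by (auto simp: free_on_def)
lemma free_on_diff: "x \<in> free_on X \<Longrightarrow> y \<in> free_on X \<Longrightarrow> x - y \<in> free_on X"
  using free_on_add[of x X "smul (-1) y"] free_on_smul[of y X "-1"] by (simp add: smul_minus_one)
lemma free_on_sum: "(\<And>a. a \<in> A \<Longrightarrow> f a \<in> free_on X) \<Longrightarrow> sum f A \<in> free_on X"
  by (induct A rule: infinite_finite_induct) (auto intro: free_on_add)
lemma free_on_lin_ext: "(\<And>a. a \<in> Poly_Mapping.keys x \<Longrightarrow> \<phi> a \<in> free_on Y) \<Longrightarrow> lin_ext \<phi> x \<in> free_on Y"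
  unfolding lin_ext_def by (rule free_on_sum) (auto intro: free_on_smul)
lemma free_on_empty: "x \<in> free_on {} \<Longrightarrow> x = 0"
  by (simp add: free_on_def)
lemma free_on_keys: "x \<in> free_on X \<Longrightarrow> a \<in> Poly_Mapping.keys x \<Longrightarrow> a \<in> X"
  by (auto simp: free_on_def)

lemma sum_product_pairing:
  fixes f :: "nat \<times> nat \<Rightarrow> 'a::comm_monoid_add"
  shows "(\<Sum>t<q. \<Sum>t'<q-1. f (t,t')) =
    (\<Sum>(t,t')\<in>{(t,t'). t < q \<and> t' < q-1 \<and> t \<le> t'}. f (t,t') + f (Suc t', t))"
proof -
  let ?A = "{(t,t'). t < q \<and> t' < q-1 \<and> t \<le> t'}" and ?B = "{(t,t'). t < q \<and> t' < q-1 \<and> t' < t}"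
  have fin: "finite ?A" "finite ?B"
    by (rule finite_subset[of _ "{..<q} \<times> {..<q-1}"]; auto)+
  have swap: "?B = (\<lambda>(t,t'). (Suc t', t)) ` ?A"
  proof (intro equalityI subsetI)
    fix z assume "z \<in> ?B"
    then obtain t t' where "z = (t, t')" "t < q" "t' < q-1" "t' < t" by auto
    then show "z \<in> (\<lambda>(t,t'). (Suc t', t)) ` ?A"
      by (intro image_eqI[of _ _ "(t', t - 1)"]) auto
  qed auto
  have "(\<Sum>t<q. \<Sum>t'<q-1. f (t,t')) = sum f (?A \<union> ?B)"
    by (simp add: sum.cartesian_product) (rule sum.cong; auto)
  also have "\<dots> = sum f ?A + sum f ?B"
    using fin by (intro sum.union_disjoint) auto
  also have "sum f ?B = sum (f \<circ> (\<lambda>(t,t'). (Suc t', t))) ?A"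
    unfolding swap by (rule sum.reindex) (auto simp: inj_on_def)
  finally show ?thesis by (simp add: sum.distrib split_def)
qed

lemma (in group) right_coset_representative:
  assumes "subgroup H G"
  obtains rep where "\<And>g. g \<in> carrier G \<Longrightarrow> \<exists>h\<in>H. rep g = g \<otimes> h"
    and "\<And>g h. g \<in> carrier G \<Longrightarrow> h \<in> H \<Longrightarrow> rep (g \<otimes> h) = rep g"
proof
  define rep where "rep g = (SOME r. r \<in> g <# H)" for g
  have rep_mem: "rep g \<in> g <# H" if "g \<in> carrier G" for g
    unfolding rep_def
    by (rule someI[of _ g]) (use that subgroup.one_closed[OF assms] in \<open>force simp: l_coset_def\<close>)
  show "\<exists>h\<in>H. rep g = g \<otimes> h" if "g \<in> carrier G" for g
    using rep_mem[OF that] unfolding l_coset_def by blast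
  show "rep (g \<otimes> h) = rep g" if "g \<in> carrier G" "h \<in> H" for g h
  proof -
    have "g \<otimes> h \<in> g <# H" using that unfolding l_coset_def by blast
    then show ?thesis unfolding rep_def using l_repr_independence[OF _ that(1) assms] by simp
  qed
qed

section \<open>Braided stability groupoids\<close>

locale braided_sg =
  fixes G :: "nat \<Rightarrow> 'g monoid" and s :: "nat \<Rightarrow> nat \<Rightarrow> 'g \<Rightarrow> 'g \<Rightarrow> 'g" and b :: "nat \<Rightarrow> nat \<Rightarrow> 'g"
  assumes braided_sg: "braided_stability_groupoid G s b"
begin

abbreviation M :: "nat \<Rightarrow> 'g \<Rightarrow> 'g \<Rightarrow> 'g" where "M n x y \<equiv> x \<otimes>\<^bsub>G n\<^esub> y"
abbreviation I :: "nat \<Rightarrow> 'g" where "I n \<equiv> \<one>\<^bsub>G n\<^esub>"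
abbreviation C :: "nat \<Rightarrow> 'g set" where "C n \<equiv> carrier (G n)"
abbreviation Inv :: "nat \<Rightarrow> 'g \<Rightarrow> 'g" where "Inv n x \<equiv> inv\<^bsub>G n\<^esub> x"

lemma sg: "stability_groupoid G s" using braided_sg unfolding braided_stability_groupoid_def by (rule conjunct1)

lemmas sgd = sg[unfolded stability_groupoid_def]
lemmas sg_parts = sgd[THEN conjunct1]
  sgd[THEN conjunct2, THEN conjunct1]
  sgd[THEN conjunct2, THEN conjunct2, THEN conjunct1]
  sgd[THEN conjunct2, THEN conjunct2, THEN conjunct2, THEN conjunct1]
  sgd[THEN conjunct2, THEN conjunct2, THEN conjunct2, THEN conjunct2, THEN conjunct1]
  sgd[THEN conjunct2, THEN conjunct2, THEN conjunct2, THEN conjunct2, THEN conjunct2, THEN conjunct1]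
  sgd[THEN conjunct2, THEN conjunct2, THEN conjunct2, THEN conjunct2, THEN conjunct2, THEN conjunct2, THEN conjunct1]
  sgd[THEN conjunct2, THEN conjunct2, THEN conjunct2, THEN conjunct2, THEN conjunct2, THEN conjunct2, THEN conjunct2, THEN conjunct1]

lemma grp: "group (G n)" using sg_parts(1) by blast
lemma mon: "monoid (G n)" using grp group.is_monoid by blast

lemma m_closed[simp,intro]: "x \<in> C n \<Longrightarrow> y \<in> C n \<Longrightarrow> M n x y \<in> C n"
  by (rule monoid.m_closed[OF mon])
lemma one_closed[simp,intro]: "I n \<in> C n" by (rule monoid.one_closed[OF mon])
lemma inv_closed[simp,intro]: "x \<in> C n \<Longrightarrow> Inv n x \<in> C n" by (rule group.inv_closed[OF grp])
lemma m_assoc: "x \<in> C n \<Longrightarrow> y \<in> C n \<Longrightarrow> z \<in> C n \<Longrightarrow> M n (M n x y) z = M n x (M n y z)"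
  by (rule monoid.m_assoc[OF mon])
lemma l_one[simp]: "x \<in> C n \<Longrightarrow> M n (I n) x = x" by (rule monoid.l_one[OF mon])
lemma r_one[simp]: "x \<in> C n \<Longrightarrow> M n x (I n) = x" by (rule monoid.r_one[OF mon])
lemma l_inv[simp]: "x \<in> C n \<Longrightarrow> M n (Inv n x) x = I n" by (rule group.l_inv[OF grp])
lemma r_inv[simp]: "x \<in> C n \<Longrightarrow> M n x (Inv n x) = I n" by (rule group.r_inv[OF grp])
lemma inv_mult: "x \<in> C n \<Longrightarrow> y \<in> C n \<Longrightarrow> Inv n (M n x y) = M n (Inv n y) (Inv n x)"
  by (rule group.inv_mult_group[OF grp])
lemma inv_inv[simp]: "x \<in> C n \<Longrightarrow> Inv n (Inv n x) = x" by (rule group.inv_inv[OF grp])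
lemma inv_one[simp]: "Inv n (I n) = I n" by (rule monoid.inv_one[OF mon])
lemma l_cancel: "x \<in> C n \<Longrightarrow> y \<in> C n \<Longrightarrow> z \<in> C n \<Longrightarrow> (M n x y = M n x z) = (y = z)"
  using monoid.Units_l_cancel[OF mon, of x n y z] group.Units_eq[OF grp, of n] by simp

lemma s_closed[simp,intro]: "g \<in> C m \<Longrightarrow> h \<in> C n \<Longrightarrow> s m n g h \<in> C (m+n)"
  using sg_parts(2) by simp
lemma s_mult: "g \<in> C m \<Longrightarrow> g' \<in> C m \<Longrightarrow> h \<in> C n \<Longrightarrow> h' \<in> C n \<Longrightarrow>
   s m n (M m g g') (M n h h') = M (m+n) (s m n g h) (s m n g' h')"
  using sg_parts(3) by simp
lemma s_inj: "g \<in> C m \<Longrightarrow> g' \<in> C m \<Longrightarrow> h \<in> C n \<Longrightarrow> h' \<in> C n \<Longrightarrow>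
   s m n g h = s m n g' h' \<Longrightarrow> g = g' \<and> h = h'"
  using inj_onD[OF sg_parts(4)[rule_format, of m n], of "(g,h)" "(g',h')"] by simp
lemma s_assoc: "f \<in> C l \<Longrightarrow> g \<in> C m \<Longrightarrow> h \<in> C n \<Longrightarrow>
        s (l+m) n (s l m f g) h = s l (m+n) f (s m n g h)"
  using sg_parts(6) by simp
lemma s_lunit: "h \<in> C n \<Longrightarrow> s 0 n (I 0) h = h"
  using sg_parts(7) by simp
lemma s_runit: "g \<in> C m \<Longrightarrow> s m 0 g (I 0) = g"
  using sg_parts(8) by simp

lemmas bsgd = braided_sg[unfolded braided_stability_groupoid_def]
lemmas bsg_parts = bsgd[THEN conjunct2, THEN conjunct1]
  bsgd[THEN conjunct2, THEN conjunct2, THEN conjunct1]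
  bsgd[THEN conjunct2, THEN conjunct2, THEN conjunct2, THEN conjunct1]
  bsgd[THEN conjunct2, THEN conjunct2, THEN conjunct2, THEN conjunct2]

lemma b_closed[simp,intro]: "b m n \<in> C (m+n)"
  using bsg_parts(1) by simp
lemma b_nat: "g \<in> C m \<Longrightarrow> h \<in> C n \<Longrightarrow> M (m+n) (b m n) (s m n g h) = M (m+n) (s n m h g) (b m n)"
  using bsg_parts(2) by simp
lemma b_hex1: "b l (m+n) = M (l+m+n) (s m (l+n) (I m) (b l n)) (s (l+m) n (b l m) (I n))"
  by (rule bsg_parts(3)[rule_format])
lemma b_hex2: "b (l+m) n = M (l+m+n) (s (l+n) m (b l n) (I m)) (s l (m+n) (I l) (b m n))"
  by (rule bsg_parts(4)[rule_format])

lemma s_one[simp]: "s m n (I m) (I n) = I (m+n)"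
proof -
  have "M (m+n) (s m n (I m) (I n)) (s m n (I m) (I n)) = s m n (I m) (I n)"
    using s_mult[of "I m" m "I m" "I n" n "I n"] by simp
  moreover have x: "s m n (I m) (I n) \<in> C (m+n)" by (rule s_closed) simp_all
  ultimately show ?thesis
    using group.l_cancel_one[OF grp x x] by blast
qed

lemma s_inv: "g \<in> C m \<Longrightarrow> h \<in> C n \<Longrightarrow> s m n (Inv m g) (Inv n h) = Inv (m+n) (s m n g h)"
proof -
  assume a: "g \<in> C m" "h \<in> C n"
  have "M (m+n) (s m n (Inv m g) (Inv n h)) (s m n g h) = I (m+n)"
    using s_mult[of "Inv m g" m g "Inv n h" n h] a by simp
  then show ?thesis using a
    by (metis group.inv_equality[OF grp] inv_closed s_closed)
qed

lemma s_split: "g \<in> C m \<Longrightarrow> h \<in> C n \<Longrightarrow> s m n g h = M (m+n) (s m n g (I n)) (s m n (I m) h)"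
  using s_mult[of g m "I m" "I n" n h] by simp
lemma s_split2: "g \<in> C m \<Longrightarrow> h \<in> C n \<Longrightarrow> s m n g h = M (m+n) (s m n (I m) h) (s m n g (I n))"
  using s_mult[of "I m" m g h n "I n"] by simp

definition place :: "nat \<Rightarrow> nat \<Rightarrow> nat \<Rightarrow> 'g \<Rightarrow> 'g" where
  "place N p w x = s p (N-p) (I p) (s w (N-p-w) x (I (N-p-w)))"

lemma place_closed[simp,intro]: assumes "p + w \<le> N" "x \<in> C w" shows "place N p w x \<in> C N"
proof -
  have e: "w + (N-p-w) = N - p" "p + (N-p) = N" using assms by auto
  have "s w (N-p-w) x (I (N-p-w)) \<in> C (N-p)" using s_closed[OF assms(2), of "I (N-p-w)" "N-p-w"] e by simp
  then show ?thesis unfolding place_def using s_closed[of "I p" p _ "N-p"] e by simp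
qed

lemma place_mult: assumes "p + w \<le> N" "x \<in> C w" "y \<in> C w"
  shows "M N (place N p w x) (place N p w y) = place N p w (M w x y)"
proof -
  have e: "w + (N-p-w) = N - p" "p + (N-p) = N" using assms by auto
  have 1: "s w (N-p-w) (M w x y) (I (N-p-w)) = M (N-p) (s w (N-p-w) x (I (N-p-w))) (s w (N-p-w) y (I (N-p-w)))"
    using s_mult[of x w y "I (N-p-w)" "N-p-w" "I (N-p-w)"] assms e by simp
  have 2: "s p (N-p) (I p) (M (N-p) u v) = M N (s p (N-p) (I p) u) (s p (N-p) (I p) v)"
    if "u \<in> C (N-p)" "v \<in> C (N-p)" for u v
    using s_mult[of "I p" p "I p" u "N-p" v] that e by simp
  have 3: "s w (N-p-w) z (I (N-p-w)) \<in> C (N-p)" if "z \<in> C w" for z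
    using s_closed[OF that, of "I (N-p-w)" "N-p-w"] e by simp
  show ?thesis unfolding place_def 1 using 2 3 assms by simp
qed

lemma place_one[simp]: "p + w \<le> N \<Longrightarrow> place N p w (I w) = I N"
  unfolding place_def by simp

lemma place_inv: assumes "p + w \<le> N" "x \<in> C w" shows "place N p w (Inv w x) = Inv N (place N p w x)"
proof -
  have "M N (place N p w (Inv w x)) (place N p w x) = I N" using assms by (simp add: place_mult)
  then show ?thesis using assms by (metis group.inv_equality[OF grp] inv_closed place_closed)
qed

lemma place_whole: assumes "x \<in> C w" shows "place w 0 w x = x"
  unfolding place_def using assms by (simp add: s_lunit s_runit)

lemma s_left_eq_place: assumes "x \<in> C j" shows "s j k x (I k) = place (j+k) 0 j x"
  unfolding place_def using assms by (simp add: s_lunit)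

lemma s_right_eq_place: assumes "y \<in> C k" shows "s j k (I j) y = place (j+k) j k y"
  unfolding place_def using assms by (simp add: s_runit)

lemma place_place: assumes "q + v \<le> w" "p + w \<le> N" "x \<in> C v"
  shows "place N p w (place w q v x) = place N (p+q) v x"
proof -
  define R where "R = N - p - w"
  define r where "r = w - q - v"
  have vr: "v + r = w - q" using assms unfolding r_def by auto
  have e1: "s (w-q) R (s v r x (I r)) (I R) = s v (r+R) x (I (r+R))"
    using s_assoc[of x v "I r" r "I R" R] assms vr by simp
  have g: "s v r x (I r) \<in> C (w - q)" using s_closed[OF assms(3), of "I r" r] vr by simp
  have e2: "s w R (place w q v x) (I R) = s q (w-q+R) (I q) (s v (r+R) x (I (r+R)))"
    using s_assoc[of "I q" q "s v r x (I r)" "w-q" "I R" R] assms g e1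
    unfolding place_def r_def[symmetric] by simp
  have Z: "s v (r+R) x (I (r+R)) \<in> C (w-q+R)"
  proof -
    have eqZ: "v + (r+R) = w - q + R" using vr by simp
    show ?thesis using s_closed[OF assms(3), of "I (r+R)" "r+R"] unfolding eqZ by simp
  qed
  have e3: "s p (N-p) (I p) (s q (w-q+R) (I q) (s v (r+R) x (I (r+R))))
          = s (p+q) (w-q+R) (I (p+q)) (s v (r+R) x (I (r+R)))"
    using s_assoc[of "I p" p "I q" q "s v (r+R) x (I (r+R))" "w-q+R"] Z assms
    unfolding R_def by simp
  have e4: "N - (p+q) = w - q + R" "N - (p + q) - v = r + R" "w - q + R - v = r + R"
    using assms unfolding R_def r_def by auto
  show ?thesis
    unfolding place_def[of N p w] R_def[symmetric] e2 e3
    unfolding place_def[of N "p+q"] e4 ..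
qed

lemma place_s: assumes "p + (j + k) \<le> N" "x \<in> C j" "y \<in> C k"
  shows "place N p (j+k) (s j k x y) = M N (place N p j x) (place N (p+j) k y)"
    and "place N p (j+k) (s j k x y) = M N (place N (p+j) k y) (place N p j x)"
proof -
  have a: "place N p (j+k) (s j k x (I k)) = place N p j x"
    using place_place[of 0 j "j+k" p N x] assms by (simp add: s_left_eq_place)
  have c: "place N p (j+k) (s j k (I j) y) = place N (p+j) k y"
    using place_place[of j k "j+k" p N y] assms by (simp add: s_right_eq_place)
  have cl: "s j k x (I k) \<in> C (j+k)" "s j k (I j) y \<in> C (j+k)" using assms by auto
  show "place N p (j+k) (s j k x y) = M N (place N p j x) (place N (p+j) k y)"
    unfolding s_split[OF assms(2,3)] a[symmetric] c[symmetric]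
    using place_mult[OF _ cl] assms by simp
  show "place N p (j+k) (s j k x y) = M N (place N (p+j) k y) (place N p j x)"
    unfolding s_split2[OF assms(2,3)] a[symmetric] c[symmetric]
    using place_mult[OF _ cl(2) cl(1)] assms by simp
qed

lemma place_extend: assumes "p + (j + k) \<le> N" "x \<in> C j"
  shows "place N p (j+k) (s j k x (I k)) = place N p j x"
  using place_s(1)[OF assms one_closed] assms by simp

lemma place_disjoint_commute: assumes "p + w \<le> p'" "p' + w' \<le> N" "x \<in> C w" "y \<in> C w'"
  shows "M N (place N p w x) (place N p' w' y) = M N (place N p' w' y) (place N p w x)"
proof -
  define d where "d = p' - (p + w)"
  have x': "s w d x (I d) \<in> C (w+d)" using assms by auto
  have 1: "place N p (w+d) (s w d x (I d)) = place N p w x"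
    by (rule place_extend) (use assms d_def in auto)
  have 2: "p + (w + d) = p'" using assms d_def by auto
  have "M N (place N p (w+d) (s w d x (I d))) (place N (p+(w+d)) w' y) = M N (place N (p+(w+d)) w' y) (place N p (w+d) (s w d x (I d)))"
    using place_s[of p "w+d" w' N "s w d x (I d)" y] x' assms 2 by simp
  then show ?thesis unfolding 1 2 .
qed

lemma place_hexagon1: assumes "W = l+(m+n)" "W1 = l+n" "W2 = l+m" "P1 = p+m" "K = m+n" "p + W \<le> N"
  shows "place N p W (b l K) = M N (place N P1 W1 (b l n)) (place N p W2 (b l m))"
proof -
  have e: "l+m+n = l+(m+n)" by simp
  have h: "b l (m+n) = M (l+(m+n)) (s m (l+n) (I m) (b l n)) (s (l+m) n (b l m) (I n))"
    using b_hex1[of l m n] unfolding e .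
  have A: "s m (l+n) (I m) (b l n) \<in> C (l+(m+n))"
    using s_closed[of "I m" m "b l n" "l+n"] by (simp add: ac_simps)
  have B: "s (l+m) n (b l m) (I n) \<in> C (l+(m+n))"
    using s_closed[of "b l m" "l+m" "I n" n] by (simp add: ac_simps)
  have 1: "place N p (l+(m+n)) (s m (l+n) (I m) (b l n)) = place N (p+m) (l+n) (b l n)"
    using place_s(1)[of p m "l+n" N "I m" "b l n"] assms by (simp add: ac_simps)
  have 2: "place N p (l+(m+n)) (s (l+m) n (b l m) (I n)) = place N p (l+m) (b l m)"
    using place_extend[of p "l+m" n N "b l m"] assms by (simp add: ac_simps)
  show ?thesis unfolding assms(1-5) h
    using place_mult[OF _ A B, of p N, symmetric] assms 1 2 by simp
qed

lemma place_hexagon2: assumes "W = l+(m+n)" "W1 = l+n" "W2 = m+n" "P2 = p+l" "K = l+m" "p + W \<le> N"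
  shows "place N p W (b K n) = M N (place N p W1 (b l n)) (place N P2 W2 (b m n))"
proof -
  have e: "l+m+n = l+(m+n)" by simp
  have h: "b (l+m) n = M (l+(m+n)) (s (l+n) m (b l n) (I m)) (s l (m+n) (I l) (b m n))"
    using b_hex2[of l m n] unfolding e .
  have A: "s (l+n) m (b l n) (I m) \<in> C (l+(m+n))"
    using s_closed[of "b l n" "l+n" "I m" m] by (simp add: ac_simps)
  have B: "s l (m+n) (I l) (b m n) \<in> C (l+(m+n))"
    using s_closed[of "I l" l "b m n" "m+n"] by (simp add: ac_simps)
  have 1: "place N p (l+(m+n)) (s (l+n) m (b l n) (I m)) = place N p (l+n) (b l n)"
    using place_extend[of p "l+n" m N "b l n"] assms by (simp add: ac_simps)
  have 2: "place N p (l+(m+n)) (s l (m+n) (I l) (b m n)) = place N (p+l) (m+n) (b m n)"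
    using place_s(1)[of p l "m+n" N "I l" "b m n"] assms by (simp add: ac_simps)
  show ?thesis unfolding assms(1-5) h
    using place_mult[OF _ A B, of p N, symmetric] assms 1 2 by simp
qed

lemma place_braid_natural: assumes "W = j+k" "P = p+j" "P' = p+k" "p + W \<le> N" "g \<in> C j" "h \<in> C k"
  shows "M N (place N p W (b j k)) (M N (place N p j g) (place N P k h)) =
         M N (M N (place N p k h) (place N P' j g)) (place N p W (b j k))"
proof -
  have n: "M (j+k) (b j k) (s j k g h) = M (j+k) (s k j h g) (b j k)" using b_nat assms by blast
  have c1: "s j k g h \<in> C (j+k)" "s k j h g \<in> C (j+k)" using assms s_closed[of h k g j] by (auto simp: ac_simps)
  have 1: "place N p (j+k) (s j k g h) = M N (place N p j g) (place N (p+j) k h)"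
    using place_s(1)[of p j k N g h] assms by simp
  have 2: "place N p (j+k) (s k j h g) = M N (place N p k h) (place N (p+k) j g)"
    using place_s(1)[of p k j N h g] assms by (simp add: ac_simps)
  have "place N p (j+k) (M (j+k) (b j k) (s j k g h)) = place N p (j+k) (M (j+k) (s k j h g) (b j k))"
    using n by simp
  then show ?thesis unfolding assms(1-3) 1[symmetric] 2[symmetric] using assms c1 place_mult[of p "j+k" N] by simp
qed

lemma mult_inv_cancel_right[simp]: "x \<in> C n \<Longrightarrow> z \<in> C n \<Longrightarrow> M n (M n x z) (Inv n z) = x"
  by (simp add: m_assoc)
lemma mult_inv_mult_cancel_right[simp]: "x \<in> C n \<Longrightarrow> z \<in> C n \<Longrightarrow> M n (M n x (Inv n z)) z = x"
  by (simp add: m_assoc)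
lemma b_closed_eq[simp]: "m + k = w \<Longrightarrow> b m k \<in> C w" using b_closed[of m k] by simp
lemma b1_closed[simp,intro]: "b 1 t \<in> C (Suc t)" using b_closed[of 1 t] by simp
lemma b_1_closed[simp,intro]: "b m 1 \<in> C (Suc m)" using b_closed[of m 1] by simp

lemma place_iota_shift:
  assumes "Suc j \<le> N" "f \<in> C j"
  shows "place N 0 (Suc j) (M (Suc j) (Inv (Suc j) (b j 1)) (s 1 j (I 1) f))
       = M N (place N 0 j f) (Inv N (place N 0 (Suc j) (b j 1)))"
proof -
  define PB where "PB = place N 0 (Suc j) (b j 1)"
  have cl: "PB \<in> C N" "place N 0 j f \<in> C N" "place N 1 j f \<in> C N"
    unfolding PB_def using assms by (auto intro!: place_closed)
  have shift: "place N 0 (Suc j) (s 1 j (I 1) f) = place N 1 j f"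
    using s_right_eq_place[OF assms(2), of 1] place_place[of 1 j "Suc j" 0 N f] assms by simp
  have nat: "M N PB (place N 0 j f) = M N (place N 1 j f) PB"
  proof -
    have "M N (place N 0 (j+1) (b j 1)) (M N (place N 0 j f) (place N (0+j) 1 (I 1))) =
          M N (M N (place N 0 1 (I 1)) (place N (0+1) j f)) (place N 0 (j+1) (b j 1))"
      by (rule place_braid_natural) (use assms in auto)
    then show ?thesis unfolding PB_def using assms by simp
  qed
  have "place N 0 (Suc j) (M (Suc j) (Inv (Suc j) (b j 1)) (s 1 j (I 1) f))
      = M N (place N 0 (Suc j) (Inv (Suc j) (b j 1))) (place N 0 (Suc j) (s 1 j (I 1) f))"
    using place_mult[of 0 "Suc j" N "Inv (Suc j) (b j 1)" "s 1 j (I 1) f"] s_closed[of "I 1" 1 f j] assms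
    by simp
  also have "\<dots> = M N (Inv N PB) (place N 1 j f)"
    unfolding shift PB_def using place_inv[of 0 "Suc j" N "b j 1"] assms by simp
  also have "\<dots> = M N (place N 0 j f) (Inv N PB)"
  proof -
    have "M N (Inv N PB) (M N (M N (place N 1 j f) PB) (Inv N PB))
        = M N (Inv N PB) (M N (M N PB (place N 0 j f)) (Inv N PB))"
      using nat by simp
    then show ?thesis using cl by (simp add: m_assoc[symmetric])
  qed
  finally show ?thesis unfolding PB_def .
qed

lemma shift_face_braid: assumes "n = l + m + L" "t < L"
 shows "M n (M n (place n l (m+L) (b m L)) (place n (l+m) (Suc t) (b 1 t))) (place n 0 (Suc (l+m)) (Inv (Suc (l+m)) (b (l+m) 1)))
   = M n (M n (place n l (Suc t) (b 1 t)) (place n (Suc l) (m + (L - 1)) (b m (L - 1)))) (place n 0 (Suc l) (Inv (Suc l) (b l 1)))"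
proof -
  define r where "r = L - Suc t"
  define bt where "bt = place n l (Suc t) (b 1 t)"
  define F where "F = place n (l+m) (Suc t) (b 1 t)"
  define A where "A = place n (l + Suc t) (m + r) (b m r)"
  define Bst where "Bst = place n l (m + Suc t) (b m (Suc t))"
  define Y where "Y = place n (Suc l) (m+t) (b m t)"
  define Z where "Z = place n l (Suc m) (b m 1)"
  define Kl where "Kl = place n 0 (Suc l) (b l 1)"
  have Lr: "L = Suc t + r" using assms r_def by simp
  have cl: "bt \<in> C n" "F \<in> C n" "A \<in> C n" "Bst \<in> C n" "Y \<in> C n" "Z \<in> C n" "Kl \<in> C n"
    unfolding bt_def F_def A_def Bst_def Y_def Z_def Kl_def using assms Lr by (auto intro!: place_closed)
  have hQ: "place n l (m+L) (b m L) = M n A Bst"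
    unfolding A_def Bst_def by (rule place_hexagon1) (use assms Lr in auto)
  have hB: "Bst = M n Y Z"
    unfolding Y_def Z_def Bst_def by (rule place_hexagon1) (use assms Lr in auto)
  have hN: "M n Bst F = M n bt Bst"
  proof -
    have "M n (place n l (m + Suc t) (b m (Suc t))) (M n (place n l m (I m)) (place n (l+m) (Suc t) (b 1 t))) =
         M n (M n (place n l (Suc t) (b 1 t)) (place n (l + Suc t) m (I m))) (place n l (m + Suc t) (b m (Suc t)))"
      by (rule place_braid_natural) (use assms Lr in auto)
    then show ?thesis unfolding Bst_def F_def bt_def using assms cl Lr by simp
  qed
  have hK0: "place n 0 (Suc (l+m)) (b (l+m) 1) = M n Kl Z"
    unfolding Kl_def Z_def by (rule place_hexagon2) (use assms Lr in auto)
  have hK: "place n 0 (Suc (l+m)) (Inv (Suc (l+m)) (b (l+m) 1)) = M n (Inv n Z) (Inv n Kl)"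
    using place_inv[of 0 "Suc (l+m)" n "b (l+m) 1"] hK0 assms cl b_closed[of "l+m" 1] by (simp add: inv_mult)
  have hQ': "place n (Suc l) (m+(L-1)) (b m (L-1)) = M n A Y"
    unfolding A_def Y_def by (rule place_hexagon1) (use assms Lr in auto)
  have hKi: "place n 0 (Suc l) (Inv (Suc l) (b l 1)) = Inv n Kl"
    unfolding Kl_def using place_inv[of 0 "Suc l" n "b l 1"] assms by simp
  have hc: "M n A bt = M n bt A"
    unfolding A_def bt_def by (rule place_disjoint_commute[symmetric]) (use assms Lr in auto)
  have "M n (M n (M n A Bst) F) (M n (Inv n Z) (Inv n Kl)) = M n (M n (M n A bt) Bst) (M n (Inv n Z) (Inv n Kl))"
    using cl hN by (simp add: m_assoc)
  also have "\<dots> = M n (M n (M n bt A) (M n Y Z)) (M n (Inv n Z) (Inv n Kl))"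
    using hc hB by simp
  also have "\<dots> = M n (M n bt (M n A Y)) (Inv n Kl)"
    using cl by (simp add: m_assoc[symmetric])
  finally show ?thesis unfolding hQ hK hQ' hKi bt_def[symmetric] F_def[symmetric] .
qed

lemma face_face_braid: assumes "p + L \<le> n" "t \<le> t'" "Suc (Suc t') \<le> L"
 shows "M n (place n p (Suc (Suc t')) (b 1 (Suc t'))) (place n (Suc p) (Suc t) (b 1 t))
      = M n (M n (place n p (Suc t) (b 1 t)) (place n (Suc p) (Suc t') (b 1 t'))) (place n p 2 (b 1 1))"
proof -
  define u where "u = t' - t"
  have tu: "t' = t + u" using assms u_def by simp
  define X1 where "X1 = place n (p + Suc t) (Suc u) (b 1 u)"
  define T where "T = place n p (Suc t) (b 1 t)"
  define S where "S = place n (p+t) 2 (b 1 1)"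
  define V where "V = place n (Suc p) (Suc t) (b 1 t)"
  define B2 where "B2 = place n p (Suc (Suc t)) (b 2 t)"
  define E where "E = place n p 2 (b 1 1)"
  define W where "W = place n p (Suc (Suc t)) (b 1 (Suc t))"
  have cl: "X1 \<in> C n" "T \<in> C n" "S \<in> C n" "V \<in> C n" "B2 \<in> C n" "E \<in> C n" "W \<in> C n"
    unfolding X1_def T_def S_def V_def B2_def E_def W_def using assms tu by (auto intro!: place_closed)
  have h1: "place n p (Suc (Suc t')) (b 1 (Suc t')) = M n X1 W"
    unfolding X1_def W_def by (rule place_hexagon1) (use assms tu in auto)
  have h2: "W = M n S T"
    unfolding W_def S_def T_def by (rule place_hexagon1) (use assms tu in auto)
  have h3: "B2 = M n T V"
    unfolding B2_def T_def V_def by (rule place_hexagon2) (use assms tu in auto)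
  have h4: "M n B2 E = M n S B2"
  proof -
    have "M n (place n p (Suc (Suc t)) (b 2 t)) (M n (place n p 2 (b 1 1)) (place n (p+2) t (I t))) =
          M n (M n (place n p t (I t)) (place n (p+t) 2 (b 1 1))) (place n p (Suc (Suc t)) (b 2 t))"
      by (rule place_braid_natural) (use assms tu in auto)
    then show ?thesis unfolding B2_def E_def S_def using assms tu cl by simp
  qed
  have h5: "place n (Suc p) (Suc t') (b 1 t') = M n X1 V"
    unfolding X1_def V_def by (rule place_hexagon1) (use assms tu in auto)
  have hc: "M n T X1 = M n X1 T"
    unfolding X1_def T_def by (rule place_disjoint_commute) (use assms tu in auto)
  have "M n (M n X1 W) V = M n X1 (M n S B2)"
    unfolding h2 h3 using cl by (simp add: m_assoc)
  also have "\<dots> = M n X1 (M n B2 E)" using h4 by simp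
  also have "\<dots> = M n (M n T (M n X1 V)) E"
    unfolding h3 using cl hc by (simp add: m_assoc[symmetric])
  finally show ?thesis unfolding h1 h5 T_def[symmetric] V_def[symmetric] E_def[symmetric] .
qed

section \<open>The complex of R Hom(0,-)\<close>

abbreviation d0 :: "nat \<Rightarrow> nat \<Rightarrow> ('g \<times> unit \<Rightarrow>\<^sub>0 'r::comm_ring_1) \<Rightarrow> ('g \<times> unit \<Rightarrow>\<^sub>0 'r)"
  where "d0 \<nu> q \<equiv> ctil_d G s b (\<lambda>j x. x) \<nu> q"
abbreviation rel0 :: "nat \<Rightarrow> nat \<Rightarrow> ('g \<times> unit \<Rightarrow>\<^sub>0 'r::comm_ring_1) set"
  where "rel0 \<nu> q \<equiv> ctil_rels G s (\<lambda>j. UNIV :: unit set) (\<lambda>j. {} :: (unit \<Rightarrow>\<^sub>0 'r) set) (\<lambda>j t x. x) \<nu> q"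
abbreviation gens0 :: "nat \<Rightarrow> nat \<Rightarrow> ('g \<times> unit) set"
  where "gens0 \<nu> q \<equiv> ctil_gens G (\<lambda>j. UNIV :: unit set) \<nu> q"

lemma ctil_rels_sum: "(\<And>a. a \<in> A \<Longrightarrow> f a \<in> ctil_rels G s X K act \<nu> q) \<Longrightarrow> sum f A \<in> ctil_rels G s X K act \<nu> q"
  unfolding ctil_rels_def by (rule rspan_sum)
lemma ctil_rels_add: "x \<in> ctil_rels G s X K act \<nu> q \<Longrightarrow> y \<in> ctil_rels G s X K act \<nu> q \<Longrightarrow> x + y \<in> ctil_rels G s X K act \<nu> q"
  unfolding ctil_rels_def by (rule rspan_add)
lemma ctil_rels_diff: "x \<in> ctil_rels G s X K act \<nu> q \<Longrightarrow> y \<in> ctil_rels G s X K act \<nu> q \<Longrightarrow> x - y \<in> ctil_rels G s X K act \<nu> q"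
  unfolding ctil_rels_def by (rule rspan_diff)
lemma ctil_rels_smul: "x \<in> ctil_rels G s X K act \<nu> q \<Longrightarrow> smul c x \<in> ctil_rels G s X K act \<nu> q"
  unfolding ctil_rels_def by (rule rspan_smul)
lemma ctil_rels_uminus: "x \<in> ctil_rels G s X K act \<nu> q \<Longrightarrow> - x \<in> ctil_rels G s X K act \<nu> q"
  unfolding ctil_rels_def by (rule rspan_uminus)
lemma ctil_rels_zero[simp]: "0 \<in> ctil_rels G s X K act \<nu> q"
  unfolding ctil_rels_def by (rule rspan_zero)

lemma ctil_face_eq_place: "t < q \<Longrightarrow> q \<le> \<nu> \<Longrightarrow> ctil_face G s b \<nu> q t = place \<nu> (\<nu> - q) (Suc t) (b 1 t)"
  unfolding ctil_face_def place_def by simp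

lemma ctil_face_closed[simp,intro]: "t < q \<Longrightarrow> q \<le> \<nu> \<Longrightarrow> ctil_face G s b \<nu> q t \<in> C \<nu>"
  by (simp add: ctil_face_eq_place)

lemma gens0_iff[simp]: "(g, x) \<in> gens0 \<nu> q \<longleftrightarrow> q \<le> \<nu> \<and> g \<in> C \<nu>"
  by (simp add: ctil_gens_def)

lemma ctil_d_gen: "ctil_d G s b io \<nu> q (gen (g, x)) = (\<Sum>t<q. smul ((-1)^t) (gen (M \<nu> g (ctil_face G s b \<nu> q t), io (\<nu>-q) x)))"
  unfolding ctil_d_def by simp
lemma ctil_d_sum: "ctil_d G s b io \<nu> q (sum f A) = (\<Sum>a\<in>A. ctil_d G s b io \<nu> q (f a))"
  unfolding ctil_d_def by (rule lin_ext_sum)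
lemma ctil_d_smul: "ctil_d G s b io \<nu> q (smul c x) = smul c (ctil_d G s b io \<nu> q x)"
  unfolding ctil_d_def by (rule lin_ext_smul)
lemma ctil_d_diff: "ctil_d G s b io \<nu> q (x - y) = ctil_d G s b io \<nu> q x - ctil_d G s b io \<nu> q y"
  unfolding ctil_d_def by (rule lin_ext_diff)
lemma ctil_d_zero[simp]: "ctil_d G s b io \<nu> q 0 = 0"
  unfolding ctil_d_def by simp

lemma stab_eq_place: "k \<in> C (\<nu> - q) \<Longrightarrow> q \<le> \<nu> \<Longrightarrow> s (\<nu>-q) q k (I q) = place \<nu> 0 (\<nu>-q) k"
  using s_left_eq_place[of k "\<nu>-q" q] by simp

lemma rel0_coset: assumes "q \<le> \<nu>" "g \<in> C \<nu>" "k \<in> C (\<nu> - q)"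
  shows "gen (M \<nu> g (place \<nu> 0 (\<nu>-q) k), x) - gen (g, x) \<in> rel0 \<nu> q"
  unfolding ctil_rels_def
proof (rule rspan_gen, rule UnI1, rule CollectI, intro exI conjI)
  show "gen (M \<nu> g (place \<nu> 0 (\<nu>-q) k), x) - gen (g, x) =
    gen (M \<nu> g (s (\<nu>-q) q k (I q)), x) - gen (g, (\<lambda>j t x. x) (\<nu>-q) k x)"
    using stab_eq_place[OF assms(3,1)] by simp
qed (use assms in auto)

lemma d0_d0_rels: assumes "2 \<le> q" "q \<le> \<nu>" "g \<in> C \<nu>"
  shows "d0 \<nu> (q-1) (d0 \<nu> q (gen (g, x))) \<in> (rel0 \<nu> (q-2) :: ('g \<times> unit \<Rightarrow>\<^sub>0 'r::comm_ring_1) set)"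
proof -
  define p where "p = \<nu> - q"
  define F where "F t = place \<nu> p (Suc t) (b 1 t)" for t
  define F' where "F' t = place \<nu> (Suc p) (Suc t) (b 1 t)" for t
  define E where "E = place \<nu> p 2 (b 1 1)"
  define f :: "nat \<times> nat \<Rightarrow> ('g \<times> unit \<Rightarrow>\<^sub>0 'r)" where
    "f = (\<lambda>(t,t'). smul ((-1)^(t+t')) (gen (M \<nu> (M \<nu> g (F t)) (F' t'), x)))"
  have fc: "ctil_face G s b \<nu> q t = F t" if "t < q" for t
    using ctil_face_eq_place[OF that assms(2)] unfolding F_def p_def .
  have fc': "ctil_face G s b \<nu> (q-1) t = F' t" if "t < q - 1" for t
  proof -
    have "ctil_face G s b \<nu> (q-1) t = place \<nu> (\<nu> - (q-1)) (Suc t) (b 1 t)" using ctil_face_eq_place that assms by simp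
    also have "\<nu> - (q-1) = Suc p" using assms p_def by simp
    finally show ?thesis unfolding F'_def .
  qed
  have Fc: "F t \<in> C \<nu>" if "t < q" for t using that assms unfolding F_def p_def by (auto intro!: place_closed)
  have F'c: "F' t \<in> C \<nu>" if "t < q - 1" for t using that assms unfolding F'_def p_def by (auto intro!: place_closed)
  have Ec: "E \<in> C \<nu>" using assms unfolding E_def p_def by (auto intro!: place_closed)
  have "d0 \<nu> (q-1) (d0 \<nu> q (gen (g, x))) = (\<Sum>t<q. \<Sum>t'<q-1. f (t,t'))"
    unfolding ctil_d_gen ctil_d_sum ctil_d_smul
    apply (simp add: smul_sum smul_smul f_def power_add)
    apply (rule sum.cong[OF refl], rule sum.cong[OF refl])
    using fc fc' by (simp add: mult.commute)
  also have "\<dots> = (\<Sum>(t,t')\<in>{(t,t'). t < q \<and> t' < q-1 \<and> t \<le> t'}. f (t,t') + f (Suc t', t))"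
    by (rule sum_product_pairing)
  also have "\<dots> \<in> rel0 \<nu> (q-2)"
  proof (rule ctil_rels_sum)
    fix z assume "z \<in> {(t,t'). t < q \<and> t' < q-1 \<and> t \<le> t'}"
    then obtain t t' where zz: "z = (t,t')" and tt: "t < q" "t' < q - 1" "t \<le> t'" by auto
    \<comment> \<open>the terms for d_t' d_t and d_t d_(t'+1) differ by b_(1,1), which lies in the stabiliser\<close>
    have faces: "M \<nu> (F (Suc t')) (F' t) = M \<nu> (M \<nu> (F t) (F' t')) E"
      unfolding F_def F'_def E_def by (rule face_face_braid) (use tt assms p_def in auto)
    define y where "y = M \<nu> (M \<nu> g (F t)) (F' t')"
    have yc: "y \<in> C \<nu>" using tt Fc F'c assms unfolding y_def by auto
    have f2: "f (Suc t', t) = smul (- ((-1)^(t+t'))) (gen (M \<nu> y E, x))"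
      unfolding f_def y_def using Fc F'c Ec tt assms faces by (simp add: m_assoc power_add mult.commute)
    have f1: "f (t,t') = smul ((-1)^(t+t')) (gen (y, x))" unfolding f_def y_def by simp
    have sumeq: "f (t,t') + f (Suc t', t) = smul (-((-1)^(t+t'))) (gen (M \<nu> y E, x) - gen (y, x))"
      unfolding f1 f2 smul_diff smul_neg by simp
    have Ee: "E = place \<nu> 0 (\<nu> - (q-2)) (place (\<nu> - (q-2)) p 2 (b 1 1))"
      unfolding E_def using place_place[of p 2 "\<nu>-(q-2)" 0 \<nu> "b 1 1"] assms p_def by simp
    have kc: "place (\<nu> - (q-2)) p 2 (b 1 1) \<in> C (\<nu> - (q-2))" using assms p_def by (auto intro!: place_closed)
    have "(gen (M \<nu> y E, x) - gen (y, x) :: 'g \<times> unit \<Rightarrow>\<^sub>0 'r) \<in> rel0 \<nu> (q-2)"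
      unfolding Ee by (rule rel0_coset) (use yc assms kc in auto)
    then have "f (t,t') + f (Suc t', t) \<in> rel0 \<nu> (q-2)" unfolding sumeq by (rule ctil_rels_smul)
    then show "(case z of (t, t') \<Rightarrow> f (t, t') + f (Suc t', t)) \<in> rel0 \<nu> (q-2)"
      using zz by simp
  qed
  finally show ?thesis .
qed

lemma lin_ext_ctil_rels: "(\<And>a. a \<in> Poly_Mapping.keys u \<Longrightarrow> \<phi> a \<in> ctil_rels G s X K act \<nu> q) \<Longrightarrow> lin_ext \<phi> u \<in> ctil_rels G s X K act \<nu> q"
  unfolding ctil_rels_def by (rule lin_ext_rspan)

lemma ctil_d_lin_ext: "ctil_d G s b io \<nu> q u = lin_ext (\<lambda>a. ctil_d G s b io \<nu> q (gen a)) u"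
  unfolding ctil_d_def by (rule lin_ext_cong) simp

lemma face_right_coset: assumes "t < j" "j \<le> \<nu>" "g \<in> C \<nu>" "k \<in> C (\<nu>-j)"
  shows "M \<nu> (M \<nu> g (place \<nu> 0 (\<nu>-j) k)) (ctil_face G s b \<nu> j t) =
         M \<nu> (M \<nu> g (ctil_face G s b \<nu> j t)) (place \<nu> 0 (\<nu>-(j-1)) (place (\<nu>-(j-1)) 0 (\<nu>-j) k))"
    and "place (\<nu>-(j-1)) 0 (\<nu>-j) k \<in> C (\<nu>-(j-1))"
proof -
  have n: "place \<nu> 0 (\<nu>-(j-1)) (place (\<nu>-(j-1)) 0 (\<nu>-j) k) = place \<nu> 0 (\<nu>-j) k"
    using place_place[of 0 "\<nu>-j" "\<nu>-(j-1)" 0 \<nu> k] assms by simp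
  have c: "M \<nu> (place \<nu> 0 (\<nu>-j) k) (place \<nu> (\<nu>-j) (Suc t) (b 1 t)) = M \<nu> (place \<nu> (\<nu>-j) (Suc t) (b 1 t)) (place \<nu> 0 (\<nu>-j) k)"
    by (rule place_disjoint_commute) (use assms in auto)
  show "M \<nu> (M \<nu> g (place \<nu> 0 (\<nu>-j) k)) (ctil_face G s b \<nu> j t) =
         M \<nu> (M \<nu> g (ctil_face G s b \<nu> j t)) (place \<nu> 0 (\<nu>-(j-1)) (place (\<nu>-(j-1)) 0 (\<nu>-j) k))"
    unfolding n ctil_face_eq_place[OF assms(1,2)] using assms c by (simp add: m_assoc)
  show "place (\<nu>-(j-1)) 0 (\<nu>-j) k \<in> C (\<nu>-(j-1))" using assms by (auto intro!: place_closed)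
qed

text \<open>\<open>\<phi> j\<close> is the component C~_(j-1) \<rightarrow> C~_j of a contracting homotopy of C~(R Hom(0,-))_\<nu>,
  given on the basis of cosets g G_(\<nu>-j); \<open>contr_below \<phi> j\<close> is its predecessor, with
  \<phi>_(-1) = 0.\<close>

definition contr_below :: "(nat \<Rightarrow> 'g \<times> unit \<Rightarrow> ('g \<times> unit \<Rightarrow>\<^sub>0 'r::comm_ring_1)) \<Rightarrow> nat \<Rightarrow> ('g \<times> unit \<Rightarrow>\<^sub>0 'r) \<Rightarrow> ('g \<times> unit \<Rightarrow>\<^sub>0 'r)" where
  "contr_below \<phi> j u = (if j = 0 then 0 else lin_ext (\<phi> (j-1)) u)"

definition contraction :: "nat \<Rightarrow> (nat \<Rightarrow> 'g \<times> unit \<Rightarrow> ('g \<times> unit \<Rightarrow>\<^sub>0 'r::comm_ring_1)) \<Rightarrow> nat \<Rightarrow> bool" where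
  "contraction \<nu> \<phi> j \<longleftrightarrow> (\<forall>g\<in>C \<nu>. \<phi> j (g,()) \<in> free_on (gens0 \<nu> (Suc j)))
     \<and> (\<forall>g\<in>C \<nu>. \<forall>k\<in>C (\<nu>-j). \<phi> j (M \<nu> g (place \<nu> 0 (\<nu>-j) k), ()) = \<phi> j (g,()))
     \<and> (\<forall>g\<in>C \<nu>. d0 \<nu> (Suc j) (\<phi> j (g,())) + contr_below \<phi> j (d0 \<nu> j (gen (g,()))) - gen (g,()) \<in> rel0 \<nu> j)"

lemma contraction_free: "contraction \<nu> \<phi> j \<Longrightarrow> u \<in> free_on (gens0 \<nu> j) \<Longrightarrow> lin_ext (\<phi> j) u \<in> free_on (gens0 \<nu> (Suc j))"
  unfolding contraction_def by (rule free_on_lin_ext) (auto dest: free_on_keys)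

lemma contraction_homotopy: assumes "contraction \<nu> \<phi> j" "u \<in> free_on (gens0 \<nu> j)"
  shows "d0 \<nu> (Suc j) (lin_ext (\<phi> j) u) + contr_below \<phi> j (d0 \<nu> j u) - u \<in> rel0 \<nu> j"
proof -
  have "d0 \<nu> (Suc j) (lin_ext (\<phi> j) u) + contr_below \<phi> j (d0 \<nu> j u) - u =
    lin_ext (\<lambda>a. d0 \<nu> (Suc j) (\<phi> j a) + contr_below \<phi> j (d0 \<nu> j (gen a)) - gen a) u"
  proof -
    have e1: "d0 \<nu> (Suc j) (lin_ext (\<phi> j) u) = lin_ext (\<lambda>a. d0 \<nu> (Suc j) (\<phi> j a)) u"
      unfolding ctil_d_def by (rule lin_ext_comp)
    have e2: "contr_below \<phi> j (d0 \<nu> j u) = lin_ext (\<lambda>a. contr_below \<phi> j (d0 \<nu> j (gen a))) u"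
      apply (subst ctil_d_lin_ext)
      unfolding contr_below_def by (cases "j=0") (simp_all add: lin_ext_def[of "\<lambda>a. 0"] lin_ext_comp)
    have e3: "lin_ext (\<lambda>a. d0 \<nu> (Suc j) (\<phi> j a) + contr_below \<phi> j (d0 \<nu> j (gen a)) - gen a) u
       = lin_ext (\<lambda>a. d0 \<nu> (Suc j) (\<phi> j a) + contr_below \<phi> j (d0 \<nu> j (gen a))) u - lin_ext gen u"
      by (simp only: lin_ext_linear_comb)
    show ?thesis unfolding e1 e2 e3 lin_ext_gen_id lin_ext_linear_comb(1) ..
  qed
  also have "\<dots> \<in> rel0 \<nu> j"
  proof (rule lin_ext_ctil_rels)
    fix a assume "a \<in> Poly_Mapping.keys u"
    then obtain g where a: "a = (g, ())" "g \<in> C \<nu>" using assms(2) by (cases a) (auto dest: free_on_keys)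
    then show "d0 \<nu> (Suc j) (\<phi> j a) + contr_below \<phi> j (d0 \<nu> j (gen a)) - gen a \<in> rel0 \<nu> j"
      using assms(1) unfolding contraction_def by auto
  qed
  finally show ?thesis .
qed

lemma contraction_rels_zero: assumes "contraction \<nu> \<phi> j" "j \<le> \<nu>" "w \<in> rel0 \<nu> j"
  shows "lin_ext (\<phi> j) w = 0"
  using assms(3) unfolding ctil_rels_def
proof (rule lin_ext_rspan_zero[rotated])
  fix y :: "'g \<times> unit \<Rightarrow>\<^sub>0 'a"
  assume "y \<in> {gen (M \<nu> g (s (\<nu>-j) j t (I j)), x) - gen (g, (\<lambda>j t x. x) (\<nu>-j) t x) | g t x.
         j \<le> \<nu> \<and> g \<in> C \<nu> \<and> t \<in> C (\<nu>-j) \<and> x \<in> (\<lambda>j. UNIV) (\<nu>-j)} \<union>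
       {lin_ext (\<lambda>x. gen (g, x)) k | g k. j \<le> \<nu> \<and> g \<in> C \<nu> \<and> k \<in> (\<lambda>j. {}) (\<nu> - j)}"
  then obtain g t where y: "y = gen (M \<nu> g (s (\<nu>-j) j t (I j)), ()) - gen (g, ())" "g \<in> C \<nu>" "t \<in> C (\<nu>-j)"
    by auto
  show "lin_ext (\<phi> j) y = 0"
    using assms(1,2) y stab_eq_place[OF y(3) assms(2)] unfolding contraction_def by (simp add: lin_ext_diff)
qed

lemma d0_gen_free: assumes "g \<in> C \<nu>" "j \<le> \<nu>"
  shows "(d0 \<nu> j (gen (g, x)) :: 'g \<times> unit \<Rightarrow>\<^sub>0 'r::comm_ring_1) \<in> free_on (gens0 \<nu> (j-1))"
  unfolding ctil_d_gen by (rule free_on_sum, rule free_on_smul, rule free_on_gen) (use assms in auto)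

lemma contr_below_upd: "contr_below (\<phi>(j:=\<psi>)) j = contr_below \<phi> j"
  unfolding contr_below_def by (rule ext) auto

lemma stabiliser_subgroup:
  assumes "j \<le> \<nu>"
  shows "subgroup (place \<nu> 0 (\<nu>-j) ` C (\<nu>-j)) (G \<nu>)"
proof
  show "place \<nu> 0 (\<nu>-j) ` C (\<nu>-j) \<subseteq> C \<nu>" using assms by auto
  show "I \<nu> \<in> place \<nu> 0 (\<nu>-j) ` C (\<nu>-j)"
    using assms by (intro image_eqI[of _ _ "I (\<nu>-j)"]) auto
next
  fix x y assume "x \<in> place \<nu> 0 (\<nu>-j) ` C (\<nu>-j)" "y \<in> place \<nu> 0 (\<nu>-j) ` C (\<nu>-j)"
  then show "M \<nu> x y \<in> place \<nu> 0 (\<nu>-j) ` C (\<nu>-j)"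
    using assms by (auto simp: place_mult)
next
  fix x assume "x \<in> place \<nu> 0 (\<nu>-j) ` C (\<nu>-j)"
  then show "Inv \<nu> x \<in> place \<nu> 0 (\<nu>-j) ` C (\<nu>-j)"
    using assms by (auto simp: place_inv[symmetric])
qed

lemma contraction_cycle:
  fixes \<phi> :: "nat \<Rightarrow> 'g \<times> unit \<Rightarrow> ('g \<times> unit \<Rightarrow>\<^sub>0 'r::comm_ring_1)"
  assumes jn: "j \<le> \<nu>" and j0: "j \<noteq> 0" and prev: "\<forall>i<j. contraction \<nu> \<phi> i" and r: "r \<in> C \<nu>"
  shows "d0 \<nu> j (gen (r,()) - contr_below \<phi> j (d0 \<nu> j (gen (r,())))) \<in> rel0 \<nu> (j-1)"
proof -
  define u where "u = d0 \<nu> j (gen (r,()) :: 'g \<times> unit \<Rightarrow>\<^sub>0 'r)"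
  have uf: "u \<in> free_on (gens0 \<nu> (j-1))" unfolding u_def by (rule d0_gen_free[OF r jn])
  have L: "d0 \<nu> j (lin_ext (\<phi> (j-1)) u) + contr_below \<phi> (j-1) (d0 \<nu> (j-1) u) - u \<in> rel0 \<nu> (j-1)"
    using contraction_homotopy[OF _ uf] prev j0 by simp
  have Z: "contr_below \<phi> (j-1) (d0 \<nu> (j-1) u) = 0"
  proof (cases "j - 1 = 0")
    case False
    have "d0 \<nu> (j-1) u \<in> rel0 \<nu> (j-2)" unfolding u_def by (rule d0_d0_rels) (use False jn r in auto)
    then have "lin_ext (\<phi> (j-2)) (d0 \<nu> (j-1) u) = 0"
      by (rule contraction_rels_zero[rotated 2]) (use prev jn False in auto)
    moreover have "j - 1 - 1 = j - 2" by arith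
    ultimately show ?thesis using False unfolding contr_below_def by simp
  qed (simp add: contr_below_def)
  have "d0 \<nu> j (gen (r,()) - contr_below \<phi> j (d0 \<nu> j (gen (r,()))))
      = - (d0 \<nu> j (lin_ext (\<phi> (j-1)) u) + contr_below \<phi> (j-1) (d0 \<nu> (j-1) u) - u)"
    unfolding u_def[symmetric] ctil_d_diff Z using j0 by (simp add: contr_below_def)
  then show ?thesis using ctil_rels_uminus[OF L] by simp
qed

lemma contr_below_coset_invariant:
  assumes "j \<le> \<nu>" "\<forall>i<j. contraction \<nu> \<phi> i" "g \<in> C \<nu>" "k \<in> C (\<nu>-j)"
  shows "contr_below \<phi> j (d0 \<nu> j (gen (M \<nu> g (place \<nu> 0 (\<nu>-j) k), ())))
       = contr_below \<phi> j (d0 \<nu> j (gen (g, ())))"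
proof (cases "j = 0")
  case False
  have "\<phi> (j-1) (M \<nu> (M \<nu> g (place \<nu> 0 (\<nu>-j) k)) (ctil_face G s b \<nu> j t), ())
      = \<phi> (j-1) (M \<nu> g (ctil_face G s b \<nu> j t), ())" if "t < j" for t
  proof -
    have "contraction \<nu> \<phi> (j-1)" using assms(2) False by simp
    then show ?thesis
      using face_right_coset[OF that assms(1,3,4)] assms that unfolding contraction_def by auto
  qed
  then show ?thesis using False unfolding contr_below_def ctil_d_gen by (simp add: lin_ext_sum lin_ext_smul)
qed (simp add: contr_below_def)

lemma contraction_extend:
  fixes \<phi> :: "nat \<Rightarrow> 'g \<times> unit \<Rightarrow> ('g \<times> unit \<Rightarrow>\<^sub>0 'r::comm_ring_1)"
  assumes jn: "j \<le> \<nu>" and prev: "\<forall>i<j. contraction \<nu> \<phi> i"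
    and H3j: "ctil_H_vanishes G s b (\<lambda>j. UNIV :: unit set) (\<lambda>j. {} :: (unit \<Rightarrow>\<^sub>0 'r) set) (\<lambda>j t x. x) (\<lambda>j x. x) (int j - 1) \<nu>"
  shows "\<exists>\<psi>. contraction \<nu> (\<phi>(j:=\<psi>)) j"
proof -
  define z :: "'g \<Rightarrow> ('g \<times> unit \<Rightarrow>\<^sub>0 'r)" where "z r = gen (r,()) - contr_below \<phi> j (d0 \<nu> j (gen (r,())))" for r
  have z_free: "z r \<in> free_on (gens0 \<nu> j)" if r: "r \<in> C \<nu>" for r
  proof -
    have "contr_below \<phi> j (d0 \<nu> j (gen (r,()))) \<in> free_on (gens0 \<nu> j)"
    proof (cases "j = 0")
      case False
      then have "contraction \<nu> \<phi> (j-1)" using prev by simp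
      from contraction_free[OF this d0_gen_free[OF r jn]] show ?thesis
        using False unfolding contr_below_def by simp
    qed (simp add: contr_below_def)
    then show ?thesis unfolding z_def by (intro free_on_diff free_on_gen) (use r jn in auto)
  qed
  have H3': "\<forall>x\<in>free_on (gens0 \<nu> j). (j = 0 \<or> d0 \<nu> j x \<in> (rel0 \<nu> (j-1) :: ('g \<times> unit \<Rightarrow>\<^sub>0 'r) set)) \<longrightarrow>
      (\<exists>y\<in>free_on (gens0 \<nu> (Suc j)). x - d0 \<nu> (Suc j) y \<in> rel0 \<nu> j)"
    using H3j unfolding ctil_H_vanishes_def by simp
  have "\<exists>y\<in>free_on (gens0 \<nu> (Suc j)). z r - d0 \<nu> (Suc j) y \<in> rel0 \<nu> j" if r: "r \<in> C \<nu>" for r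
  proof -
    have "j = 0 \<or> d0 \<nu> j (z r) \<in> rel0 \<nu> (j-1)"
      using contraction_cycle[OF jn _ prev r] unfolding z_def by blast
    then show ?thesis using H3' z_free[OF r] by blast
  qed
  then obtain Y where Y: "\<And>r. r \<in> C \<nu> \<Longrightarrow> Y r \<in> free_on (gens0 \<nu> (Suc j))"
      "\<And>r. r \<in> C \<nu> \<Longrightarrow> z r - d0 \<nu> (Suc j) (Y r) \<in> rel0 \<nu> j"
    by metis
  obtain rep where rep: "\<And>g. g \<in> C \<nu> \<Longrightarrow> \<exists>h\<in>place \<nu> 0 (\<nu>-j) ` C (\<nu>-j). rep g = M \<nu> g h"
    and rep_coset: "\<And>g h. g \<in> C \<nu> \<Longrightarrow> h \<in> place \<nu> 0 (\<nu>-j) ` C (\<nu>-j) \<Longrightarrow> rep (M \<nu> g h) = rep g"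
    using group.right_coset_representative[OF grp stabiliser_subgroup[OF jn]] by blast
  have rep_place: "\<exists>k\<in>C (\<nu>-j). rep g = M \<nu> g (place \<nu> 0 (\<nu>-j) k)" if "g \<in> C \<nu>" for g
    using rep[OF that] by blast
  have rep_closed: "rep g \<in> C \<nu>" if "g \<in> C \<nu>" for g
    using rep_place[OF that] that jn by auto
  define \<psi> :: "'g \<times> unit \<Rightarrow> ('g \<times> unit \<Rightarrow>\<^sub>0 'r)" where "\<psi> = (\<lambda>(g, x). Y (rep g))"
  have "contraction \<nu> (\<phi>(j:=\<psi>)) j"
    unfolding contraction_def contr_below_upd
  proof (intro conjI ballI)
    fix g assume g: "g \<in> C \<nu>"
    show "(\<phi>(j := \<psi>)) j (g, ()) \<in> free_on (gens0 \<nu> (Suc j))"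
      using Y(1) rep_closed[OF g] unfolding \<psi>_def by simp
    show "(\<phi>(j := \<psi>)) j (M \<nu> g (place \<nu> 0 (\<nu>-j) k), ()) = (\<phi>(j := \<psi>)) j (g, ())"
      if "k \<in> C (\<nu>-j)" for k
      using rep_coset[OF g imageI[OF that]] unfolding \<psi>_def by simp
    obtain k where k: "k \<in> C (\<nu>-j)" "rep g = M \<nu> g (place \<nu> 0 (\<nu>-j) k)" using rep_place[OF g] by blast
    have eq: "d0 \<nu> (Suc j) ((\<phi>(j := \<psi>)) j (g, ())) + contr_below \<phi> j (d0 \<nu> j (gen (g, ()))) - gen (g, ())
        = (gen (rep g, ()) - gen (g, ())) - (z (rep g) - d0 \<nu> (Suc j) (Y (rep g)))"
      using contr_below_coset_invariant[OF jn prev g k(1)] unfolding z_def \<psi>_def k(2)[symmetric] by simp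
    have coset: "gen (rep g, ()) - gen (g, ()) \<in> rel0 \<nu> j"
      unfolding k(2) by (rule rel0_coset) (use jn g k in auto)
    show "d0 \<nu> (Suc j) ((\<phi>(j := \<psi>)) j (g, ())) + contr_below \<phi> j (d0 \<nu> j (gen (g, ()))) - gen (g, ())
        \<in> rel0 \<nu> j"
      unfolding eq by (rule ctil_rels_diff[OF coset Y(2)[OF rep_closed[OF g]]])
  qed
  then show ?thesis by blast
qed

lemma contraction_exists:
  fixes \<nu> L :: nat
  assumes "L \<le> \<nu>"
    and H3: "\<forall>j\<le>L. ctil_H_vanishes G s b (\<lambda>j. UNIV :: unit set) (\<lambda>j. {} :: (unit \<Rightarrow>\<^sub>0 'r::comm_ring_1) set) (\<lambda>j t x. x) (\<lambda>j x. x) (int j - 1) \<nu>"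
  shows "\<exists>\<phi> :: nat \<Rightarrow> 'g \<times> unit \<Rightarrow> ('g \<times> unit \<Rightarrow>\<^sub>0 'r). \<forall>j\<le>L. contraction \<nu> \<phi> j"
  using assms
proof (induction L)
  case 0
  obtain \<psi> where "contraction \<nu> ((\<lambda>_ _. 0 :: 'g \<times> unit \<Rightarrow>\<^sub>0 'r)(0:=\<psi>)) 0"
    using contraction_extend[of 0 \<nu> "\<lambda>_ _. 0"] 0 by auto
  then show ?case by auto
next
  case (Suc L)
  then obtain \<phi> :: "nat \<Rightarrow> 'g \<times> unit \<Rightarrow> ('g \<times> unit \<Rightarrow>\<^sub>0 'r)" where \<phi>: "\<forall>j\<le>L. contraction \<nu> \<phi> j" by auto
  have h: "ctil_H_vanishes G s b (\<lambda>j. UNIV :: unit set) (\<lambda>j. {} :: (unit \<Rightarrow>\<^sub>0 'r) set) (\<lambda>j t x. x) (\<lambda>j x. x) (int (Suc L) - 1) \<nu>"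
    using Suc.prems(2) by blast
  have "\<forall>i<Suc L. contraction \<nu> \<phi> i" using \<phi> by auto
  from contraction_extend[OF Suc.prems(1) this h] obtain \<psi> where \<psi>: "contraction \<nu> (\<phi>(Suc L:=\<psi>)) (Suc L)" by blast
  have "contraction \<nu> (\<phi>(Suc L:=\<psi>)) j" if "j \<le> L" for j
  proof -
    have "(\<phi>(Suc L:=\<psi>)) j = \<phi> j" "contr_below (\<phi>(Suc L:=\<psi>)) j = contr_below \<phi> j"
      using that unfolding contr_below_def by (auto intro!: ext)
    then show ?thesis using \<phi> that unfolding contraction_def by simp
  qed
  then show ?case using \<psi> by (metis le_Suc_eq)
qed

end

section \<open>The complex of R Hom(m,-) \<otimes> W\<close>

locale homW_complex = braided_sg G s b for G :: "nat \<Rightarrow> 'g monoid" and s b +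
  fixes n m :: nat and sm :: "'r::comm_ring_1 \<Rightarrow> 'w::ab_group_add \<Rightarrow> 'w" and actW :: "'g \<Rightarrow> 'w \<Rightarrow> 'w"
begin

abbreviation dV :: "nat \<Rightarrow> ('g \<times> ('g \<times> 'w) \<Rightarrow>\<^sub>0 'r) \<Rightarrow> ('g \<times> ('g \<times> 'w) \<Rightarrow>\<^sub>0 'r)"
  where "dV q \<equiv> ctil_d G s b (homW_iota G s b) n q"
abbreviation relV :: "nat \<Rightarrow> ('g \<times> ('g \<times> 'w) \<Rightarrow>\<^sub>0 'r) set"
  where "relV q \<equiv> ctil_rels G s (homW_gens G m) (homW_rels G s sm actW m) (homW_act G) n q"
abbreviation gensV :: "nat \<Rightarrow> ('g \<times> ('g \<times> 'w)) set"
  where "gensV q \<equiv> ctil_gens G (homW_gens G m) n q"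

lemma gensV_iff[simp]: "(g, (f, w)) \<in> gensV q \<longleftrightarrow> q \<le> n \<and> g \<in> C n \<and> m \<le> n - q \<and> f \<in> C (n-q)"
  by (auto simp: ctil_gens_def homW_gens_def)

lemma relV_balance: assumes "q \<le> n" "m \<le> n - q" "\<beta> \<in> C n" "f \<in> C (n-q)"
  shows "gen (M n \<beta> (place n 0 (n-q) f), (I (n-q), w)) - gen (\<beta>, (f, w)) \<in> relV q"
  unfolding ctil_rels_def
proof (rule rspan_gen, rule UnI1, rule CollectI, intro exI conjI)
  show "gen (M n \<beta> (place n 0 (n-q) f), (I (n-q), w)) - gen (\<beta>, (f, w)) =
    gen (M n \<beta> (s (n-q) q f (I q)), (I (n-q), w)) - gen (\<beta>, homW_act G (n-q) f (I (n-q), w))"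
    using stab_eq_place[OF assms(4,1)] assms by (simp add: homW_act_def)
qed (use assms in \<open>auto simp: homW_gens_def\<close>)

lemma relV_balance': assumes "q \<le> n" "m \<le> n - q" "\<beta> \<in> C n" "f \<in> C (n-q)"
  shows "gen (\<beta>, (f, w)) - gen (M n \<beta> (place n 0 (n-q) f), (I (n-q), w)) \<in> relV q"
  using ctil_rels_uminus[OF relV_balance[OF assms, of w]] by simp

lemma relV_homW_rel: assumes "q \<le> n" "\<beta> \<in> C n" "k \<in> homW_rels G s sm actW m (n-q)"
  shows "lin_ext (\<lambda>x. gen (\<beta>, x)) k \<in> relV q"
  unfolding ctil_rels_def by (rule rspan_gen, rule UnI2) (use assms in auto)

lemma relV_additive: assumes "q \<le> n" "m \<le> n - q" "\<beta> \<in> C n" "f \<in> C (n-q)"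
  shows "gen (\<beta>, (f, w + w')) - gen (\<beta>, (f, w)) - gen (\<beta>, (f, w')) \<in> relV q"
proof -
  have "gen (f, w + w') - gen (f, w) - gen (f, w') \<in> homW_rels G s sm actW m (n-q)"
    unfolding homW_rels_def if_P[OF assms(2)] using assms(4) by blast
  from relV_homW_rel[OF assms(1,3) this] show ?thesis by (simp add: lin_ext_diff)
qed

lemma relV_homogeneous: assumes "q \<le> n" "m \<le> n - q" "\<beta> \<in> C n" "f \<in> C (n-q)"
  shows "gen (\<beta>, (f, sm c w)) - smul c (gen (\<beta>, (f, w))) \<in> relV q"
proof -
  have "gen (f, sm c w) - smul c (gen (f, w)) \<in> homW_rels G s sm actW m (n-q)"
    unfolding homW_rels_def if_P[OF assms(2)] using assms(4) by blast
  from relV_homW_rel[OF assms(1,3) this] show ?thesis by (simp add: lin_ext_diff lin_ext_smul)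
qed

lemma relV_coset: assumes "q + m \<le> n" "\<beta> \<in> C n" "\<kappa> \<in> C (n-q-m)"
  shows "gen (M n \<beta> (place n 0 (n-q-m) \<kappa>), (I (n-q), w)) - gen (\<beta>, (I (n-q), w)) \<in> relV q"
proof -
  define f' where "f' = s (n-q-m) m \<kappa> (I m)"
  have e: "n - q - m + m = n - q" using assms by simp
  have f'1: "f' = place (n-q) 0 (n-q-m) \<kappa>" unfolding f'_def using s_left_eq_place[OF assms(3), of m] e by simp
  have f'c: "f' \<in> C (n-q)" unfolding f'1 using assms by (auto intro!: place_closed)
  have f'2: "place n 0 (n-q) f' = place n 0 (n-q-m) \<kappa>"
    unfolding f'1 using place_place[of 0 "n-q-m" "n-q" 0 n \<kappa>] assms by simp
  have r1: "gen (M n \<beta> (place n 0 (n-q) f'), (I (n-q), w)) - gen (\<beta>, (f', w)) \<in> relV q"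
    by (rule relV_balance) (use assms f'c in auto)
  have "gen (M (n-q) (I (n-q)) (s (n-q-m) m \<kappa> (I m)), w) - gen (I (n-q), w) \<in> homW_rels G s sm actW m (n-q)"
    unfolding homW_rels_def using assms by auto
  from relV_homW_rel[OF _ assms(2) this] have r2: "gen (\<beta>, (f', w)) - gen (\<beta>, (I (n-q), w)) \<in> relV q"
    using assms f'c unfolding f'_def[symmetric] by (simp add: lin_ext_diff)
  show ?thesis using ctil_rels_add[OF r1 r2] unfolding f'2 by simp
qed

lemma relV_Gm_action: assumes "q + m \<le> n" "\<beta> \<in> C n" "h \<in> C m"
  shows "gen (M n \<beta> (place n (n-q-m) m h), (I (n-q), w)) - gen (\<beta>, (I (n-q), actW h w)) \<in> relV q"
proof -
  define f' where "f' = s (n-q-m) m (I (n-q-m)) h"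
  have e: "n - q - m + m = n - q" using assms by simp
  have f'1: "f' = place (n-q) (n-q-m) m h" unfolding f'_def using s_right_eq_place[OF assms(3), of "n-q-m"] e by simp
  have f'c: "f' \<in> C (n-q)" unfolding f'1 using assms by (auto intro!: place_closed)
  have f'2: "place n 0 (n-q) f' = place n (n-q-m) m h"
    unfolding f'1 using place_place[of "n-q-m" m "n-q" 0 n h] assms by simp
  have r1: "gen (M n \<beta> (place n 0 (n-q) f'), (I (n-q), w)) - gen (\<beta>, (f', w)) \<in> relV q"
    by (rule relV_balance) (use assms f'c in auto)
  have m: "m \<le> n - q" using assms by arith
  have "gen (M (n-q) (I (n-q)) (s (n-q-m) m (I (n-q-m)) h), w) - gen (I (n-q), actW h w) \<in> homW_rels G s sm actW m (n-q)"
    unfolding homW_rels_def if_P[OF m] by (rule UnI2) (use assms in blast)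
  from relV_homW_rel[OF _ assms(2) this] have r2: "gen (\<beta>, (f', w)) - gen (\<beta>, (I (n-q), actW h w)) \<in> relV q"
    using assms f'c unfolding f'_def[symmetric] by (simp add: lin_ext_diff)
  show ?thesis using ctil_rels_add[OF r1 r2] unfolding f'2 by simp
qed

definition dsum :: "'g \<Rightarrow> 'g \<Rightarrow> 'g" where "dsum v h = M n (place n 0 (n-m) v) (place n (n-m) m h)"
definition Q :: "nat \<Rightarrow> 'g" where "Q q = place n (n-q-m) (m+q) (b m q)"

lemma dsum_eq_s: assumes "m \<le> n" "v \<in> C (n-m)" "h \<in> C m" shows "dsum v h = s (n-m) m v h"
proof -
  have "place n 0 (n-m+m) (s (n-m) m v h) = M n (place n 0 (n-m) v) (place n (0 + (n-m)) m h)"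
    by (rule place_s(1)) (use assms in auto)
  moreover have "s (n-m) m v h \<in> C n" using s_closed[OF assms(2,3)] assms by simp
  ultimately show ?thesis unfolding dsum_def using assms place_whole by simp
qed

lemma dsum_closed[simp,intro]: "m \<le> n \<Longrightarrow> v \<in> C (n-m) \<Longrightarrow> h \<in> C m \<Longrightarrow> dsum v h \<in> C n"
  unfolding dsum_def by (auto intro!: place_closed)

lemma dsum_mult: assumes "m \<le> n" "v \<in> C (n-m)" "h \<in> C m" "v' \<in> C (n-m)" "h' \<in> C m"
  shows "M n (dsum v h) (dsum v' h') = dsum (M (n-m) v v') (M m h h')"
  using s_mult[of v "n-m" v' h m h'] assms by (simp add: dsum_eq_s)

lemma dsum_one[simp]: "m \<le> n \<Longrightarrow> dsum (I (n-m)) (I m) = I n"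
  by (simp add: dsum_eq_s)

lemma dsum_inv: assumes "m \<le> n" "v \<in> C (n-m)" "h \<in> C m"
  shows "Inv n (dsum v h) = dsum (Inv (n-m) v) (Inv m h)"
  using s_inv[of v "n-m" h m] assms by (simp add: dsum_eq_s)

lemma dsum_inj: assumes "m \<le> n" "v \<in> C (n-m)" "h \<in> C m" "v' \<in> C (n-m)" "h' \<in> C m" "dsum v h = dsum v' h'"
  shows "v = v' \<and> h = h'"
  using s_inj[of v "n-m" v' h m h'] assms by (simp add: dsum_eq_s)

lemma Q_closed[simp,intro]: "m + q \<le> n \<Longrightarrow> Q q \<in> C n"
  unfolding Q_def by (rule place_closed) auto

lemma Q_commute_place: assumes "m + q \<le> n" "\<kappa> \<in> C (n-q-m)"
  shows "M n (place n 0 (n-q-m) \<kappa>) (Q q) = M n (Q q) (place n 0 (n-q-m) \<kappa>)"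
  unfolding Q_def by (rule place_disjoint_commute) (use assms in auto)

lemma Q_braid_natural: assumes "m + q \<le> n" "h \<in> C m"
  shows "M n (Q q) (place n (n-q-m) m h) = M n (place n (n-m) m h) (Q q)"
proof -
  have "M n (place n (n-q-m) (m+q) (b m q)) (M n (place n (n-q-m) m h) (place n (n-q-m+m) q (I q))) =
        M n (M n (place n (n-q-m) q (I q)) (place n (n-q-m+q) m h)) (place n (n-q-m) (m+q) (b m q))"
    by (rule place_braid_natural) (use assms in auto)
  moreover have "n - q - m + q = n - m" using assms by simp
  ultimately show ?thesis unfolding Q_def using assms by simp
qed

definition coset_rep :: "'g \<Rightarrow> 'g" where
  "coset_rep \<gamma> = (SOME \<alpha>. \<alpha> \<in> C n \<and> (\<exists>v\<in>C (n-m). \<exists>h\<in>C m. \<gamma> = M n \<alpha> (dsum v h)))"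
definition coset_dec :: "'g \<Rightarrow> 'g \<times> 'g" where
  "coset_dec \<gamma> = (SOME vh. fst vh \<in> C (n-m) \<and> snd vh \<in> C m \<and> \<gamma> = M n (coset_rep \<gamma>) (dsum (fst vh) (snd vh)))"

lemma coset_rep_props: assumes "m \<le> n" "\<gamma> \<in> C n"
  shows "coset_rep \<gamma> \<in> C n \<and> (\<exists>v\<in>C (n-m). \<exists>h\<in>C m. \<gamma> = M n (coset_rep \<gamma>) (dsum v h))"
  unfolding coset_rep_def
proof (rule someI)
  show "\<gamma> \<in> C n \<and> (\<exists>v\<in>C (n-m). \<exists>h\<in>C m. \<gamma> = M n \<gamma> (dsum v h))"
    using assms by (intro conjI bexI[of _ "I (n-m)"] bexI[of _ "I m"]) auto
qed

lemma coset_dec_props: assumes "m \<le> n" "\<gamma> \<in> C n"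
  shows "fst (coset_dec \<gamma>) \<in> C (n-m) \<and> snd (coset_dec \<gamma>) \<in> C m \<and> \<gamma> = M n (coset_rep \<gamma>) (dsum (fst (coset_dec \<gamma>)) (snd (coset_dec \<gamma>)))"
  unfolding coset_dec_def
proof (rule someI_ex)
  from coset_rep_props[OF assms] obtain v h where "v \<in> C (n-m)" "h \<in> C m" "\<gamma> = M n (coset_rep \<gamma>) (dsum v h)" by blast
  then show "\<exists>vh. fst vh \<in> C (n-m) \<and> snd vh \<in> C m \<and> \<gamma> = M n (coset_rep \<gamma>) (dsum (fst vh) (snd vh))"
    by (intro exI[of _ "(v,h)"]) simp
qed

lemma coset_dec_unique: assumes "m \<le> n" "\<gamma> \<in> C n" "v \<in> C (n-m)" "h \<in> C m" "\<gamma> = M n (coset_rep \<gamma>) (dsum v h)"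
  shows "coset_dec \<gamma> = (v, h)"
proof -
  have d: "fst (coset_dec \<gamma>) \<in> C (n-m)" "snd (coset_dec \<gamma>) \<in> C m" "\<gamma> = M n (coset_rep \<gamma>) (dsum (fst (coset_dec \<gamma>)) (snd (coset_dec \<gamma>)))"
    using coset_dec_props[OF assms(1,2)] by auto
  have r: "coset_rep \<gamma> \<in> C n" using coset_rep_props[OF assms(1,2)] by auto
  have "dsum (fst (coset_dec \<gamma>)) (snd (coset_dec \<gamma>)) = dsum v h"
  proof -
    have "M n (coset_rep \<gamma>) (dsum (fst (coset_dec \<gamma>)) (snd (coset_dec \<gamma>))) = M n (coset_rep \<gamma>) (dsum v h)"
      using d(3) assms(5) by simp
    then show ?thesis using l_cancel[of "coset_rep \<gamma>" n "dsum (fst (coset_dec \<gamma>)) (snd (coset_dec \<gamma>))" "dsum v h"]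
      r d(1,2) assms(1,3,4) by simp
  qed
  then show ?thesis using dsum_inj[OF assms(1) d(1,2) assms(3,4)] by (simp add: prod_eq_iff)
qed

lemma coset_rep_right_invariant: assumes "m \<le> n" "\<gamma> \<in> C n" "v \<in> C (n-m)" "h \<in> C m"
  shows "coset_rep (M n \<gamma> (dsum v h)) = coset_rep \<gamma>"
proof -
  have "(\<lambda>\<alpha>. \<alpha> \<in> C n \<and> (\<exists>v'\<in>C (n-m). \<exists>h'\<in>C m. M n \<gamma> (dsum v h) = M n \<alpha> (dsum v' h'))) =
        (\<lambda>\<alpha>. \<alpha> \<in> C n \<and> (\<exists>v'\<in>C (n-m). \<exists>h'\<in>C m. \<gamma> = M n \<alpha> (dsum v' h')))"
  proof (intro ext iffI conjI)
    fix \<alpha> assume "\<alpha> \<in> C n \<and> (\<exists>v'\<in>C (n-m). \<exists>h'\<in>C m. M n \<gamma> (dsum v h) = M n \<alpha> (dsum v' h'))"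
    then obtain v' h' where a: "\<alpha> \<in> C n" "v' \<in> C (n-m)" "h' \<in> C m" "M n \<gamma> (dsum v h) = M n \<alpha> (dsum v' h')" by blast
    have "\<gamma> = M n (M n \<gamma> (dsum v h)) (Inv n (dsum v h))" using assms by simp
    also have "\<dots> = M n \<alpha> (dsum (M (n-m) v' (Inv (n-m) v)) (M m h' (Inv m h)))"
      unfolding a(4) using a assms by (simp add: m_assoc dsum_inv dsum_mult)
    finally show "\<alpha> \<in> C n" "\<exists>v'\<in>C (n-m). \<exists>h'\<in>C m. \<gamma> = M n \<alpha> (dsum v' h')" using a assms by auto
  next
    fix \<alpha> assume "\<alpha> \<in> C n \<and> (\<exists>v'\<in>C (n-m). \<exists>h'\<in>C m. \<gamma> = M n \<alpha> (dsum v' h'))"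
    then obtain v' h' where a: "\<alpha> \<in> C n" "v' \<in> C (n-m)" "h' \<in> C m" "\<gamma> = M n \<alpha> (dsum v' h')" by blast
    have "M n \<gamma> (dsum v h) = M n \<alpha> (dsum (M (n-m) v' v) (M m h' h))"
      unfolding a(4) using a assms by (simp add: m_assoc dsum_mult)
    then show "\<alpha> \<in> C n" "\<exists>v'\<in>C (n-m). \<exists>h'\<in>C m. M n \<gamma> (dsum v h) = M n \<alpha> (dsum v' h')" using a assms by auto
  qed
  then show ?thesis unfolding coset_rep_def by simp
qed

definition induce :: "nat \<Rightarrow> 'g \<Rightarrow> 'g \<Rightarrow> 'w \<Rightarrow> ('g \<times> unit \<Rightarrow>\<^sub>0 'r) \<Rightarrow> ('g \<times> ('g \<times> 'w) \<Rightarrow>\<^sub>0 'r)" where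
  "induce q \<alpha> h w = lin_ext (\<lambda>(v, _). gen (M n (M n \<alpha> (dsum v h)) (Q q), (I (n-q), w)))"

lemma lin_ext_ctil_rels_map:
  assumes "\<And>y. y \<in> T \<Longrightarrow> lin_ext \<phi> y \<in> ctil_rels G s X K act \<nu> q" "x \<in> rspan T"
  shows "lin_ext \<phi> x \<in> ctil_rels G s X K act \<nu> q"
  using assms unfolding ctil_rels_def by (rule lin_ext_rspan_map)

lemma induce_gen: "induce q \<alpha> h w (gen (v, u)) = gen (M n (M n \<alpha> (dsum v h)) (Q q), (I (n-q), w))"
  unfolding induce_def by simp

lemma induce_rels: assumes "m + q \<le> n" "\<alpha> \<in> C n" "h \<in> C m" "y \<in> rel0 (n-m) q"
  shows "induce q \<alpha> h w y \<in> relV q"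
  using assms(4) unfolding ctil_rels_def[of _ _ "\<lambda>j. UNIV :: unit set"] induce_def
proof (rule lin_ext_ctil_rels_map[rotated])
  fix y :: "'g \<times> unit \<Rightarrow>\<^sub>0 'r"
  assume "y \<in> {gen (M (n-m) g (s (n-m-q) q t (I q)), x) - gen (g, (\<lambda>j t x. x) (n-m-q) t x) | g t x.
         q \<le> n-m \<and> g \<in> C (n-m) \<and> t \<in> C (n-m-q) \<and> x \<in> (\<lambda>j. UNIV) (n-m-q)} \<union>
       {lin_ext (\<lambda>x. gen (g, x)) k | g k. q \<le> n-m \<and> g \<in> C (n-m) \<and> k \<in> (\<lambda>j. {}) (n-m-q)}"
  then obtain v t where y: "y = gen (M (n-m) v (s (n-m-q) q t (I q)), ()) - gen (v, ())" "v \<in> C (n-m)" "t \<in> C (n-m-q)"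
    by auto
  have e: "n - m - q = n - q - m" by simp
  have tp: "s (n-m-q) q t (I q) = place (n-m) 0 (n-m-q) t" using stab_eq_place[of t "n-m" q] y assms by simp
  have tc: "place (n-m) 0 (n-m-q) t \<in> C (n-m)" using y assms by (auto intro!: place_closed)
  have sv1: "dsum (M (n-m) v (place (n-m) 0 (n-m-q) t)) h = M n (dsum v h) (place n 0 (n-q-m) t)"
  proof -
    have "dsum (M (n-m) v (place (n-m) 0 (n-m-q) t)) h = M n (dsum v h) (dsum (place (n-m) 0 (n-m-q) t) (I m))"
      using dsum_mult[of v h "place (n-m) 0 (n-m-q) t" "I m"] assms y tc by simp
    also have "dsum (place (n-m) 0 (n-m-q) t) (I m) = place n 0 (n-q-m) t"
      unfolding dsum_def using place_place[of 0 "n-m-q" "n-m" 0 n t] assms y e by simp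
    finally show ?thesis .
  qed
  have tc': "t \<in> C (n-q-m)" using y e by simp
  have "lin_ext (\<lambda>(v, _). gen (M n (M n \<alpha> (dsum v h)) (Q q), (I (n-q), w))) y =
      gen (M n (M n (M n \<alpha> (dsum v h)) (Q q)) (place n 0 (n-q-m) t), (I (n-q), w)) - gen (M n (M n \<alpha> (dsum v h)) (Q q), (I (n-q), w))"
    unfolding y(1) tp lin_ext_diff using sv1 assms y tc' Q_commute_place[of q t]
    by (simp add: m_assoc)
  also have "\<dots> \<in> relV q" by (rule relV_coset) (use assms y tc' in auto)
  finally show "lin_ext (\<lambda>(v, _). gen (M n (M n \<alpha> (dsum v h)) (Q q), (I (n-q), w))) y \<in> relV q" .
qed

lemma Q_face_braid: assumes "m + L \<le> n" "t < L"
  shows "M n (M n (Q L) (place n (n-L) (Suc t) (b 1 t))) (place n 0 (Suc (n-L)) (Inv (Suc (n-L)) (b (n-L) 1)))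
   = M n (M n (place n (n-L-m) (Suc t) (b 1 t)) (Q (L-1))) (place n 0 (Suc (n-L-m)) (Inv (Suc (n-L-m)) (b (n-L-m) 1)))"
proof -
  define l where "l = n - L - m"
  have e: "n = l + m + L" "l + m = n - L" "n - (L-1) - m = Suc l" "n - L - m = l" using assms l_def by auto
  have "M n (M n (place n l (m+L) (b m L)) (place n (l+m) (Suc t) (b 1 t))) (place n 0 (Suc (l+m)) (Inv (Suc (l+m)) (b (l+m) 1)))
   = M n (M n (place n l (Suc t) (b 1 t)) (place n (Suc l) (m + (L - 1)) (b m (L - 1)))) (place n 0 (Suc l) (Inv (Suc l) (b l 1)))"
    by (rule shift_face_braid) (use e assms in auto)
  then show ?thesis unfolding Q_def e(2,3,4) .
qed

lemma homW_iota_one: "homW_iota G s b j (I j, w) = (Inv (Suc j) (b j 1), w)"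
  unfolding homW_iota_def by simp

lemma induce_face:
  assumes "m + L \<le> n" "t < L" "\<alpha> \<in> C n" "h \<in> C m" "v \<in> C (n-m)"
  shows "gen (M n (M n (M n \<alpha> (dsum v h)) (Q L)) (ctil_face G s b n L t), homW_iota G s b (n-L) (I (n-L), w))
       - gen (M n (M n \<alpha> (dsum (M (n-m) v (ctil_face G s b (n-m) L t)) h)) (Q (L-1)), (I (n-(L-1)), w))
       \<in> relV (L-1)"
proof -
  define j where "j = n - L"
  define l where "l = n - L - m"
  have e: "n - (L-1) = Suc j" "n - (L-1) - m = Suc l" "n - m - L = l" "n - L = j" "n - L - m = l"
    using assms unfolding j_def l_def by auto
  define Bj where "Bj = Inv (Suc j) (b j 1)"
  define Kl where "Kl = Inv (Suc l) (b l 1)"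
  define F where "F = place n j (Suc t) (b 1 t)"
  define F' where "F' = place (n-m) l (Suc t) (b 1 t)"
  define bt where "bt = place n l (Suc t) (b 1 t)"
  have Bjc: "Bj \<in> C (Suc j)" and Klc: "Kl \<in> C (Suc l)" unfolding Bj_def Kl_def by simp_all
  have face: "ctil_face G s b n L t = F" and face': "ctil_face G s b (n-m) L t = F'"
    unfolding F_def F'_def using ctil_face_eq_place[OF assms(2)] assms e by simp_all
  have Fc: "F \<in> C n" "F' \<in> C (n-m)" "bt \<in> C n"
    unfolding F_def F'_def bt_def using assms e by (auto intro!: place_closed)
  define \<beta> where "\<beta> = M n \<alpha> (dsum v h)"
  have \<beta>c: "\<beta> \<in> C n" unfolding \<beta>_def using assms by auto
  define \<beta>' where "\<beta>' = M n (M n \<beta> (Q L)) F"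
  define \<delta> where "\<delta> = M n (M n \<alpha> (dsum (M (n-m) v F') h)) (Q (L-1))"
  have \<beta>'c: "\<beta>' \<in> C n" unfolding \<beta>'_def using \<beta>c Fc assms by auto
  have \<delta>c: "\<delta> \<in> C n" unfolding \<delta>_def using assms Fc by auto
  have dsum_F': "dsum (M (n-m) v F') h = M n (dsum v h) bt"
  proof -
    have "dsum (M (n-m) v F') h = M n (dsum v h) (dsum F' (I m))"
      using dsum_mult[of v h F' "I m"] assms Fc by simp
    also have "dsum F' (I m) = bt"
      unfolding dsum_def F'_def bt_def using place_place[of l "Suc t" "n-m" 0 n "b 1 t"] assms e by simp
    finally show ?thesis .
  qed
  have "M n \<beta>' (place n 0 (Suc j) Bj) = M n \<beta> (M n (M n (Q L) F) (place n 0 (Suc j) Bj))"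
    unfolding \<beta>'_def using \<beta>c Fc assms Bjc e by (simp add: m_assoc)
  also have "\<dots> = M n \<beta> (M n (M n bt (Q (L-1))) (place n 0 (Suc l) Kl))"
    unfolding F_def bt_def Bj_def Kl_def using Q_face_braid[OF assms(1,2)] e by simp
  also have "\<dots> = M n \<delta> (place n 0 (Suc l) Kl)"
    unfolding \<delta>_def dsum_F' \<beta>_def using assms Fc Klc e by (simp add: m_assoc)
  finally have eq: "M n \<beta>' (place n 0 (Suc j) Bj) = M n \<delta> (place n 0 (Suc l) Kl)" .
  have "gen (\<beta>', (Bj, w)) - gen (M n \<beta>' (place n 0 (Suc j) Bj), (I (Suc j), w)) \<in> relV (L-1)"
    using relV_balance'[of "L-1" \<beta>' Bj w] assms \<beta>'c Bjc e by simp
  moreover have "gen (M n \<delta> (place n 0 (Suc l) Kl), (I (Suc j), w)) - gen (\<delta>, (I (Suc j), w)) \<in> relV (L-1)"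
  proof -
    have "L - 1 + m \<le> n" using assms by arith
    from relV_coset[OF this \<delta>c, unfolded e(2), OF Klc] show ?thesis unfolding e(1) .
  qed
  ultimately have "gen (\<beta>', (Bj, w)) - gen (\<delta>, (I (Suc j), w)) \<in> relV (L-1)"
    unfolding eq using ctil_rels_add by fastforce
  then show ?thesis
    unfolding \<beta>'_def \<beta>_def \<delta>_def face face' homW_iota_one Bj_def e by simp
qed

lemma induce_d_gen: assumes "m + L \<le> n" "\<alpha> \<in> C n" "h \<in> C m" "v \<in> C (n-m)"
  shows "dV L (induce L \<alpha> h w (gen (v,()))) - induce (L-1) \<alpha> h w (d0 (n-m) L (gen (v,()))) \<in> relV (L-1)"
proof -
  have lhs: "dV L (induce L \<alpha> h w (gen (v,()))) = (\<Sum>t<L. smul ((-1)^t)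
      (gen (M n (M n (M n \<alpha> (dsum v h)) (Q L)) (ctil_face G s b n L t), homW_iota G s b (n-L) (I (n-L), w))))"
    unfolding induce_gen by (rule ctil_d_gen)
  have rhs: "induce (L-1) \<alpha> h w (d0 (n-m) L (gen (v,()))) = (\<Sum>t<L. smul ((-1)^t)
      (gen (M n (M n \<alpha> (dsum (M (n-m) v (ctil_face G s b (n-m) L t)) h)) (Q (L-1)), (I (n-(L-1)), w))))"
    unfolding ctil_d_gen induce_def lin_ext_sum lin_ext_smul by simp
  show ?thesis unfolding lhs rhs sum_subtractf[symmetric] smul_diff[symmetric]
    by (intro ctil_rels_sum ctil_rels_smul induce_face) (use assms in auto)
qed

definition untwist :: "nat \<Rightarrow> 'g \<Rightarrow> 'g \<Rightarrow> 'g" where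
  "untwist q g f = M n (M n g (place n 0 (n-q) f)) (Inv n (Q q))"

definition transported :: "(nat \<Rightarrow> 'g \<times> unit \<Rightarrow> ('g \<times> unit \<Rightarrow>\<^sub>0 'r)) \<Rightarrow> nat \<Rightarrow> 'g \<times> ('g \<times> 'w) \<Rightarrow> ('g \<times> ('g \<times> 'w) \<Rightarrow>\<^sub>0 'r)" where
  "transported \<phi> q x = (case x of (g, (f, w)) \<Rightarrow>
     induce (Suc q) (coset_rep (untwist q g f)) (snd (coset_dec (untwist q g f))) w (\<phi> q (fst (coset_dec (untwist q g f)), ())))"

lemma untwist_closed[simp,intro]: "m + q \<le> n \<Longrightarrow> g \<in> C n \<Longrightarrow> f \<in> C (n-q) \<Longrightarrow> untwist q g f \<in> C n"
  unfolding untwist_def by (auto intro!: place_closed)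

lemma untwist_coset_dec_closed:
  assumes "m + q \<le> n" "g \<in> C n" "f \<in> C (n-q)"
  shows "fst (coset_dec (untwist q g f)) \<in> C (n-m)" "snd (coset_dec (untwist q g f)) \<in> C m"
    "coset_rep (untwist q g f) \<in> C n"
  using coset_dec_props[OF _ untwist_closed[OF assms]] coset_rep_props[OF _ untwist_closed[OF assms]] assms
  by auto

lemma gen_eq_induce: assumes "m + q \<le> n" "g \<in> C n" "f \<in> C (n-q)"
  shows "gen (g, (f, w)) - induce q (coset_rep (untwist q g f)) (snd (coset_dec (untwist q g f))) w (gen (fst (coset_dec (untwist q g f)), ()))
         \<in> relV q"
proof -
  have mn: "m \<le> n" using assms by simp
  note d = coset_dec_props[OF mn untwist_closed[OF assms]]
  have "M n (M n (coset_rep (untwist q g f)) (dsum (fst (coset_dec (untwist q g f))) (snd (coset_dec (untwist q g f))))) (Q q)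
      = M n g (place n 0 (n-q) f)"
    using d[THEN conjunct2, THEN conjunct2, symmetric] assms unfolding untwist_def by (simp add: )
  then show ?thesis unfolding induce_gen using relV_balance'[of q g f w] assms by simp
qed

lemma untwist_face: assumes "m + q \<le> n" "1 \<le> q" "t < q" "g \<in> C n" "f \<in> C (n-q)"
  shows "untwist (q-1) (M n g (ctil_face G s b n q t)) (fst (homW_iota G s b (n-q) (f, w))) =
         M n (untwist q g f) (dsum (M (n-m) (ctil_face G s b (n-m) q t)
              (place (n-m) 0 (Suc (n-q-m)) (Inv (Suc (n-q-m)) (b (n-q-m) 1)))) (I m))"
proof -
  define j where "j = n - q"
  define l where "l = n - q - m"
  have e: "n - (q-1) = Suc j" "n - (q-1) - m = Suc l" "n - m - q = l" "n - q = j" "n - q - m = l" "j - m = l"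
    using assms unfolding j_def l_def by auto
  define \<kappa> where "\<kappa> = Inv (Suc l) (b l 1)"
  define PB where "PB = place n 0 (Suc j) (b j 1)"
  define F where "F = place n j (Suc t) (b 1 t)"
  define F' where "F' = place (n-m) l (Suc t) (b 1 t)"
  define bt where "bt = place n l (Suc t) (b 1 t)"
  define K where "K = place n 0 (Suc l) \<kappa>"
  have fc: "f \<in> C j" using assms e by simp
  have cl: "PB \<in> C n" "F \<in> C n" "F' \<in> C (n-m)" "bt \<in> C n" "K \<in> C n" "place n 0 j f \<in> C n"
    "\<kappa> \<in> C (Suc l)" "place (n-m) 0 (Suc l) \<kappa> \<in> C (n-m)" "Q (q-1) \<in> C n" "Q q \<in> C n"
    unfolding PB_def F_def F'_def bt_def K_def \<kappa>_def using assms e fc by (auto intro!: place_closed)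
  have face: "ctil_face G s b n q t = F" unfolding F_def using ctil_face_eq_place[OF assms(3), of n] assms e by simp
  have face': "ctil_face G s b (n-m) q t = F'" unfolding F'_def using ctil_face_eq_place[OF assms(3), of "n-m"] assms e by simp
  have iota: "place n 0 (Suc j) (fst (homW_iota G s b j (f, w))) = M n (place n 0 j f) (Inv n PB)"
    unfolding homW_iota_def PB_def using place_iota_shift[of j n f] assms e fc by simp
  have F_commute: "M n F (place n 0 j f) = M n (place n 0 j f) F"
    unfolding F_def by (rule place_disjoint_commute[symmetric]) (use assms e fc in auto)
  have Q_face: "M n (M n (Q q) F) (Inv n PB) = M n (M n bt (Q (q-1))) K"
  proof -
    have "place n 0 (Suc (n-q)) (Inv (Suc (n-q)) (b (n-q) 1)) = Inv n PB"
      unfolding PB_def using place_inv[of 0 "Suc j" n "b j 1"] assms e by simp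
    moreover have "place n 0 (Suc (n-q-m)) (Inv (Suc (n-q-m)) (b (n-q-m) 1)) = K" unfolding K_def \<kappa>_def e(5) ..
    ultimately show ?thesis using Q_face_braid[OF _ assms(3)] assms unfolding F_def bt_def e by simp
  qed
  have K_commute: "M n K (Q (q-1)) = M n (Q (q-1)) K"
  proof -
    have "M n (place n 0 (n-(q-1)-m) \<kappa>) (Q (q-1)) = M n (Q (q-1)) (place n 0 (n-(q-1)-m) \<kappa>)"
      by (rule Q_commute_place) (use assms cl e in auto)
    then show ?thesis unfolding K_def e(2) .
  qed
  have dsum_K: "dsum (M (n-m) F' (place (n-m) 0 (Suc l) \<kappa>)) (I m) = M n bt K"
  proof -
    have "dsum F' (I m) = bt"
      unfolding dsum_def F'_def bt_def using place_place[of l "Suc t" "n-m" 0 n "b 1 t"] assms e by simp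
    moreover have "dsum (place (n-m) 0 (Suc l) \<kappa>) (I m) = K"
      unfolding dsum_def K_def using place_place[of 0 "Suc l" "n-m" 0 n \<kappa>] assms e cl by simp
    ultimately show ?thesis
      using dsum_mult[of F' "I m" "place (n-m) 0 (Suc l) \<kappa>" "I m"] assms cl by simp
  qed
  have "untwist (q-1) (M n g F) (fst (homW_iota G s b j (f, w)))
      = M n (M n (M n g F) (M n (place n 0 j f) (Inv n PB))) (Inv n (Q (q-1)))"
    unfolding untwist_def e iota ..
  also have "\<dots> = M n (M n (M n (M n g (place n 0 j f)) F) (Inv n PB)) (Inv n (Q (q-1)))"
  proof -
    have "M n (M n x F) (place n 0 j f) = M n (M n x (place n 0 j f)) F" if "x \<in> C n" for x
      using that cl F_commute by (simp add: m_assoc)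
    then show ?thesis using cl assms by (simp add: m_assoc[symmetric])
  qed
  also have "M n g (place n 0 j f) = M n (untwist q g f) (Q q)"
    unfolding untwist_def e using assms cl by (simp add: m_assoc)
  also have "M n (M n (M n (M n (untwist q g f) (Q q)) F) (Inv n PB)) (Inv n (Q (q-1)))
      = M n (untwist q g f) (M n (M n (M n bt (Q (q-1))) K) (Inv n (Q (q-1))))"
    unfolding Q_face[symmetric] using cl assms by (simp add: m_assoc)
  also have "\<dots> = M n (untwist q g f) (M n bt K)"
  proof -
    have "M n (Q (q-1)) (M n K (Inv n (Q (q-1)))) = K"
      using K_commute[symmetric] cl by (simp add: m_assoc[symmetric])
    then show ?thesis using cl by (simp add: m_assoc)
  qed
  finally show ?thesis unfolding face face' dsum_K \<kappa>_def[symmetric] e .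
qed

lemma transported_face:
  assumes "m + q \<le> n" "1 \<le> q" "t < q" "g \<in> C n" "f \<in> C (n-q)" "contraction (n-m) \<phi> (q-1)"
  shows "transported \<phi> (q-1) (M n g (ctil_face G s b n q t), homW_iota G s b (n-q) (f, w))
     = induce q (coset_rep (untwist q g f)) (snd (coset_dec (untwist q g f))) w
         (\<phi> (q-1) (M (n-m) (fst (coset_dec (untwist q g f))) (ctil_face G s b (n-m) q t), ()))"
proof -
  have mn: "m \<le> n" using assms by simp
  define \<gamma> where "\<gamma> = untwist q g f"
  have \<gamma>c: "\<gamma> \<in> C n" unfolding \<gamma>_def using assms by auto
  define \<alpha> where "\<alpha> = coset_rep \<gamma>"
  define v where "v = fst (coset_dec \<gamma>)"
  define h where "h = snd (coset_dec \<gamma>)"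
  have d: "v \<in> C (n-m)" "h \<in> C m" "\<gamma> = M n \<alpha> (dsum v h)" "\<alpha> \<in> C n"
    using coset_dec_props[OF mn \<gamma>c] coset_rep_props[OF mn \<gamma>c] unfolding v_def h_def \<alpha>_def by auto
  define \<kappa> where "\<kappa> = Inv (Suc (n-q-m)) (b (n-q-m) 1)"
  have e\<kappa>: "n - m - (q-1) = Suc (n - q - m)" using assms by arith
  have \<kappa>c: "\<kappa> \<in> C (n-m-(q-1))" unfolding e\<kappa> \<kappa>_def by (rule inv_closed) simp
  define F' where "F' = ctil_face G s b (n-m) q t"
  have F'c: "F' \<in> C (n-m)" unfolding F'_def using assms by auto
  define c where "c = M (n-m) F' (place (n-m) 0 (n-m-(q-1)) \<kappa>)"
  have pc: "place (n-m) 0 (n-m-(q-1)) \<kappa> \<in> C (n-m)" using \<kappa>c assms by (auto intro!: place_closed)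
  have cc: "c \<in> C (n-m)" unfolding c_def using F'c pc by auto
  define \<gamma>t where "\<gamma>t = untwist (q-1) (M n g (ctil_face G s b n q t)) (fst (homW_iota G s b (n-q) (f, w)))"
  have gt: "\<gamma>t = M n \<gamma> (dsum c (I m))"
    unfolding \<gamma>t_def \<gamma>_def c_def F'_def e\<kappa> \<kappa>_def by (rule untwist_face) (use assms in auto)
  have gtc: "\<gamma>t \<in> C n" unfolding gt using \<gamma>c cc mn by auto
  have rt: "coset_rep \<gamma>t = \<alpha>" unfolding gt \<alpha>_def by (rule coset_rep_right_invariant) (use mn \<gamma>c cc in auto)
  have "\<gamma>t = M n (coset_rep \<gamma>t) (dsum (M (n-m) v c) h)"
    unfolding rt using gt d cc mn by (simp add: m_assoc dsum_mult)
  then have dt: "coset_dec \<gamma>t = (M (n-m) v c, h)"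
    by (intro coset_dec_unique[OF mn gtc]) (use d cc in auto)
  have hp: "\<phi> (q-1) (M (n-m) v c, ()) = \<phi> (q-1) (M (n-m) v F', ())"
  proof -
    have "M (n-m) v c = M (n-m) (M (n-m) v F') (place (n-m) 0 (n-m-(q-1)) \<kappa>)"
      unfolding c_def using d F'c pc by (simp add: m_assoc)
    moreover have "M (n-m) v F' \<in> C (n-m)" using d F'c by auto
    ultimately show ?thesis using assms(6) \<kappa>c unfolding contraction_def by auto
  qed
  have iota: "homW_iota G s b (n-q) (f, w) = (fst (homW_iota G s b (n-q) (f, w)), w)"
    unfolding homW_iota_def by simp
  have qq: "Suc (q-1) = q" using assms by simp
  have "transported \<phi> (q-1) (M n g (ctil_face G s b n q t), homW_iota G s b (n-q) (f, w))
      = induce q \<alpha> h w (\<phi> (q-1) (M (n-m) v F', ()))"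
    apply (subst iota)
    unfolding transported_def prod.case \<gamma>t_def[symmetric] qq dt rt fst_conv snd_conv hp ..
  then show ?thesis unfolding \<alpha>_def h_def v_def \<gamma>_def F'_def .
qed

lemma transported_d:
  assumes "m + q \<le> n" "1 \<le> q" "g \<in> C n" "f \<in> C (n-q)" "contraction (n-m) \<phi> (q-1)"
  shows "lin_ext (transported \<phi> (q-1)) (dV q (gen (g,(f,w)))) =
    induce q (coset_rep (untwist q g f)) (snd (coset_dec (untwist q g f))) w
      (lin_ext (\<phi> (q-1)) (d0 (n-m) q (gen (fst (coset_dec (untwist q g f)), ()))))"
  unfolding ctil_d_gen lin_ext_sum lin_ext_smul lin_ext_gen induce_def
  using transported_face[OF assms(1,2) _ assms(3,4,5)] by (simp add: induce_def)

lemma coset_dec_right_mult: assumes "m \<le> n" "\<gamma> \<in> C n" "c \<in> C (n-m)" "d \<in> C m"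
  shows "coset_rep (M n \<gamma> (dsum c d)) = coset_rep \<gamma>"
    and "coset_dec (M n \<gamma> (dsum c d)) = (M (n-m) (fst (coset_dec \<gamma>)) c, M m (snd (coset_dec \<gamma>)) d)"
proof -
  show r: "coset_rep (M n \<gamma> (dsum c d)) = coset_rep \<gamma>" by (rule coset_rep_right_invariant) (use assms in auto)
  have d: "fst (coset_dec \<gamma>) \<in> C (n-m)" "snd (coset_dec \<gamma>) \<in> C m" "\<gamma> = M n (coset_rep \<gamma>) (dsum (fst (coset_dec \<gamma>)) (snd (coset_dec \<gamma>)))"
    "coset_rep \<gamma> \<in> C n"
    using coset_dec_props[OF assms(1,2)] coset_rep_props[OF assms(1,2)] by auto
  have "M n \<gamma> (dsum c d) = M n (coset_rep (M n \<gamma> (dsum c d))) (dsum (M (n-m) (fst (coset_dec \<gamma>)) c) (M m (snd (coset_dec \<gamma>)) d))"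
  proof -
    have "M n \<gamma> (dsum c d) = M n (M n (coset_rep \<gamma>) (dsum (fst (coset_dec \<gamma>)) (snd (coset_dec \<gamma>)))) (dsum c d)"
      using arg_cong[OF d(3), of "\<lambda>z. M n z (dsum c d)"] .
    also have "\<dots> = M n (coset_rep \<gamma>) (dsum (M (n-m) (fst (coset_dec \<gamma>)) c) (M m (snd (coset_dec \<gamma>)) d))"
      using d(1,2,4) assms by (simp add: m_assoc dsum_mult)
    finally show ?thesis unfolding r .
  qed
  then show "coset_dec (M n \<gamma> (dsum c d)) = (M (n-m) (fst (coset_dec \<gamma>)) c, M m (snd (coset_dec \<gamma>)) d)"
    by (intro coset_dec_unique) (use assms d in auto)
qed

lemma untwist_stab: assumes "m + q \<le> n" "g \<in> C n" "t \<in> C (n-q)" "f \<in> C (n-q)"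
  shows "untwist q (M n g (place n 0 (n-q) t)) f = untwist q g (M (n-q) t f)"
  unfolding untwist_def using assms by (simp add: m_assoc place_mult)

lemma untwist_left_stab: assumes "m + q \<le> n" "g \<in> C n" "f \<in> C (n-q)" "\<kappa> \<in> C (n-q-m)"
  shows "untwist q g (M (n-q) f (s (n-q-m) m \<kappa> (I m))) = M n (untwist q g f) (dsum (place (n-m) 0 (n-m-q) \<kappa>) (I m))"
proof -
  have e: "n - q - m + m = n - q" "n - m - q = n - q - m" using assms by auto
  have sk: "s (n-q-m) m \<kappa> (I m) = place (n-q) 0 (n-q-m) \<kappa>" using s_left_eq_place[OF assms(4), of m] e by simp
  have skc: "place (n-q) 0 (n-q-m) \<kappa> \<in> C (n-q)" using assms by (auto intro!: place_closed)
  have n1: "place n 0 (n-q) (place (n-q) 0 (n-q-m) \<kappa>) = place n 0 (n-q-m) \<kappa>"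
    using place_place[of 0 "n-q-m" "n-q" 0 n \<kappa>] assms by simp
  have n2: "dsum (place (n-m) 0 (n-m-q) \<kappa>) (I m) = place n 0 (n-q-m) \<kappa>"
    unfolding dsum_def e using place_place[of 0 "n-q-m" "n-m" 0 n \<kappa>] assms by simp
  have kc: "place n 0 (n-q-m) \<kappa> \<in> C n" using assms by (auto intro!: place_closed)
  have Qc: "Q q \<in> C n" using assms by auto
  have qc: "M n (place n 0 (n-q-m) \<kappa>) (Inv n (Q q)) = M n (Inv n (Q q)) (place n 0 (n-q-m) \<kappa>)"
  proof -
    have "M n (Inv n (Q q)) (M n (M n (place n 0 (n-q-m) \<kappa>) (Q q)) (Inv n (Q q))) =
          M n (Inv n (Q q)) (M n (M n (Q q) (place n 0 (n-q-m) \<kappa>)) (Inv n (Q q)))"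
      using Q_commute_place[OF _ assms(4)] assms by simp
    then show ?thesis using kc Qc by (simp add: m_assoc[symmetric])
  qed
  have pm: "place n 0 (n-q) (M (n-q) f (place (n-q) 0 (n-q-m) \<kappa>)) = M n (place n 0 (n-q) f) (place n 0 (n-q-m) \<kappa>)"
    using place_mult[of 0 "n-q" n f "place (n-q) 0 (n-q-m) \<kappa>"] assms skc n1 by simp
  have fc: "place n 0 (n-q) f \<in> C n" using assms by (auto intro!: place_closed)
  show ?thesis unfolding untwist_def sk n2 pm using kc Qc qc fc assms by (simp add: m_assoc)
qed

lemma untwist_Gm: assumes "m + q \<le> n" "g \<in> C n" "f \<in> C (n-q)" "h' \<in> C m"
  shows "untwist q g (M (n-q) f (s (n-q-m) m (I (n-q-m)) h')) = M n (untwist q g f) (dsum (I (n-m)) h')"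
proof -
  have e: "n - q - m + m = n - q" using assms by auto
  have sk: "s (n-q-m) m (I (n-q-m)) h' = place (n-q) (n-q-m) m h'" using s_right_eq_place[OF assms(4), of "n-q-m"] e by simp
  have skc: "place (n-q) (n-q-m) m h' \<in> C (n-q)" using assms by (auto intro!: place_closed)
  have n1: "place n 0 (n-q) (place (n-q) (n-q-m) m h') = place n (n-q-m) m h'"
    using place_place[of "n-q-m" m "n-q" 0 n h'] assms by simp
  have n2: "dsum (I (n-m)) h' = place n (n-m) m h'" unfolding dsum_def using assms by simp
  have c1: "place n (n-q-m) m h' \<in> C n" "place n (n-m) m h' \<in> C n" using assms by (auto intro!: place_closed)
  have Qc: "Q q \<in> C n" using assms by auto
  have qc: "M n (place n (n-q-m) m h') (Inv n (Q q)) = M n (Inv n (Q q)) (place n (n-m) m h')"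
  proof -
    have "M n (Inv n (Q q)) (M n (M n (Q q) (place n (n-q-m) m h')) (Inv n (Q q))) =
          M n (Inv n (Q q)) (M n (M n (place n (n-m) m h') (Q q)) (Inv n (Q q)))"
      using Q_braid_natural[OF _ assms(4)] assms by simp
    then show ?thesis using c1 Qc by (simp add: m_assoc[symmetric])
  qed
  have pm: "place n 0 (n-q) (M (n-q) f (place (n-q) (n-q-m) m h')) = M n (place n 0 (n-q) f) (place n (n-q-m) m h')"
    using place_mult[of 0 "n-q" n f "place (n-q) (n-q-m) m h'"] assms skc n1 by simp
  have fc: "place n 0 (n-q) f \<in> C n" using assms by (auto intro!: place_closed)
  show ?thesis unfolding untwist_def sk n2 pm using c1 Qc qc fc assms by (simp add: m_assoc)
qed

lemma transported_gen: "transported \<phi> q (g, (f, w)) = induce (Suc q) (coset_rep (untwist q g f)) (snd (coset_dec (untwist q g f))) w (\<phi> q (fst (coset_dec (untwist q g f)), ()))"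
  unfolding transported_def by simp

lemma keys_free_gens0: "a \<in> Poly_Mapping.keys e \<Longrightarrow> e \<in> free_on (gens0 \<nu> q') \<Longrightarrow> \<exists>v. a = (v, ()) \<and> v \<in> C \<nu> \<and> q' \<le> \<nu>"
  by (cases a) (auto dest: free_on_keys)

lemma transported_free: assumes "contraction (n-m) \<phi> q" "(g, (f, w)) \<in> gensV q"
  shows "transported \<phi> q (g, (f, w)) \<in> free_on (gensV (Suc q))"
proof -
  have a: "m + q \<le> n" "g \<in> C n" "f \<in> C (n-q)" using assms(2) by auto
  have mn: "m \<le> n" using a by simp
  define \<gamma> where "\<gamma> = untwist q g f"
  have \<gamma>c: "\<gamma> \<in> C n" unfolding \<gamma>_def using a by auto
  have d: "fst (coset_dec \<gamma>) \<in> C (n-m)" "snd (coset_dec \<gamma>) \<in> C m" "coset_rep \<gamma> \<in> C n"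
    using coset_dec_props[OF mn \<gamma>c] coset_rep_props[OF mn \<gamma>c] by auto
  have e: "\<phi> q (fst (coset_dec \<gamma>), ()) \<in> free_on (gens0 (n-m) (Suc q))" using assms(1) d unfolding contraction_def by auto
  show ?thesis unfolding transported_gen \<gamma>_def[symmetric] induce_def
    by (rule free_on_lin_ext) (use e d mn in \<open>auto dest!: free_on_keys intro!: free_on_gen\<close>)
qed

lemma relV_dsum_Gm:
  assumes "m + q \<le> n" "\<alpha> \<in> C n" "v \<in> C (n-m)" "h \<in> C m" "h' \<in> C m"
  shows "gen (M n (M n \<alpha> (dsum v (M m h h'))) (Q q), (I (n-q), w)) -
         gen (M n (M n \<alpha> (dsum v h)) (Q q), (I (n-q), actW h' w)) \<in> relV q"
proof -
  have mn: "m \<le> n" using assms by simp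
  have p1: "place n (n-m) m h' \<in> C n" "place n (n-q-m) m h' \<in> C n"
    using assms by (auto intro!: place_closed)
  have "dsum v (M m h h') = M n (dsum v h) (dsum (I (n-m)) h')"
    using dsum_mult[OF mn assms(3,4) one_closed assms(5)] assms by simp
  also have "dsum (I (n-m)) h' = place n (n-m) m h'" unfolding dsum_def using mn assms by simp
  finally have "M n (M n \<alpha> (dsum v (M m h h'))) (Q q) = M n (M n (M n \<alpha> (dsum v h)) (Q q)) (place n (n-q-m) m h')"
    using Q_braid_natural[OF assms(1,5)] p1 assms mn by (simp add: m_assoc)
  moreover have "gen (M n (M n (M n \<alpha> (dsum v h)) (Q q)) (place n (n-q-m) m h'), (I (n-q), w)) -
      gen (M n (M n \<alpha> (dsum v h)) (Q q), (I (n-q), actW h' w)) \<in> relV q"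
    by (rule relV_Gm_action) (use assms mn in auto)
  ultimately show ?thesis by simp
qed

lemma transported_homW_rel: assumes "m + q \<le> n" "contraction (n-m) \<phi> q" "g \<in> C n"
    "k \<in> homW_rels G s sm actW m (n-q)"
  shows "lin_ext (\<lambda>x. transported \<phi> q (g, x)) k \<in> relV (Suc q)"
proof -
  have mn: "m \<le> n" using assms by simp
  have m2: "m \<le> n - q" using assms by simp
  from assms(4)[unfolded homW_rels_def if_P[OF m2]]
  consider (a) f w w' where "k = gen (f, w + w') - gen (f, w) - gen (f, w')" "f \<in> C (n-q)"
    | (b) f c w where "k = gen (f, sm c w) - smul c (gen (f, w))" "f \<in> C (n-q)"
    | (c) f \<kappa> w where "k = gen (M (n-q) f (s (n-q-m) m \<kappa> (I m)), w) - gen (f, w)" "f \<in> C (n-q)" "\<kappa> \<in> C (n-q-m)"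
    | (d) f h' w where "k = gen (M (n-q) f (s (n-q-m) m (I (n-q-m)) h'), w) - gen (f, actW h' w)" "f \<in> C (n-q)" "h' \<in> C m"
    by blast
  then show ?thesis
  proof cases
    case a
    note d = untwist_coset_dec_closed[OF assms(1,3) a(2)]
    have e: "\<phi> q (fst (coset_dec (untwist q g f)), ()) \<in> free_on (gens0 (n-m) (Suc q))"
      using assms(2) d unfolding contraction_def by auto
    show ?thesis unfolding a(1) lin_ext_diff lin_ext_gen transported_gen induce_def lin_ext_linear_comb
      by (rule lin_ext_ctil_rels) (use d mn in \<open>auto dest!: keys_free_gens0[OF _ e] intro!: relV_additive\<close>)
  next
    case b
    note d = untwist_coset_dec_closed[OF assms(1,3) b(2)]
    have e: "\<phi> q (fst (coset_dec (untwist q g f)), ()) \<in> free_on (gens0 (n-m) (Suc q))"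
      using assms(2) d unfolding contraction_def by auto
    have sm: "smul c (lin_ext \<psi> x) = lin_ext (\<lambda>a. smul c (\<psi> a)) x"
      for \<psi> :: "'g \<times> unit \<Rightarrow> ('g \<times> ('g \<times> 'w) \<Rightarrow>\<^sub>0 'r)" and x
      unfolding lin_ext_def smul_sum by (simp add: smul_smul mult.commute)
    show ?thesis unfolding b(1) lin_ext_diff lin_ext_smul lin_ext_gen transported_gen induce_def sm
      lin_ext_linear_comb
      by (rule lin_ext_ctil_rels) (use d mn in \<open>auto dest!: keys_free_gens0[OF _ e] intro!: relV_homogeneous\<close>)
  next
    case c
    define \<gamma> where "\<gamma> = untwist q g f"
    have \<gamma>c: "\<gamma> \<in> C n" unfolding \<gamma>_def using c assms by auto
    have e: "n - m - q = n - q - m" by simp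
    have kc: "place (n-m) 0 (n-m-q) \<kappa> \<in> C (n-m)" using c assms e by (auto intro!: place_closed)
    have g': "untwist q g (M (n-q) f (s (n-q-m) m \<kappa> (I m))) = M n \<gamma> (dsum (place (n-m) 0 (n-m-q) \<kappa>) (I m))"
      unfolding \<gamma>_def by (rule untwist_left_stab) (use assms c in auto)
    have d: "fst (coset_dec \<gamma>) \<in> C (n-m)" "snd (coset_dec \<gamma>) \<in> C m"
      using coset_dec_props[OF mn \<gamma>c] by auto
    have hp: "\<phi> q (M (n-m) (fst (coset_dec \<gamma>)) (place (n-m) 0 (n-m-q) \<kappa>), ()) = \<phi> q (fst (coset_dec \<gamma>), ())"
      using assms(2) d c e unfolding contraction_def by auto
    show ?thesis unfolding c(1) lin_ext_diff lin_ext_gen transported_gen g' \<gamma>_def[symmetric]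
      coset_dec_right_mult[OF mn \<gamma>c kc one_closed] using hp d by simp
  next
    case d
    define \<gamma> where "\<gamma> = untwist q g f"
    have \<gamma>c: "\<gamma> \<in> C n" unfolding \<gamma>_def using d assms by auto
    have g': "untwist q g (M (n-q) f (s (n-q-m) m (I (n-q-m)) h')) = M n \<gamma> (dsum (I (n-m)) h')"
      unfolding \<gamma>_def by (rule untwist_Gm) (use assms d in auto)
    note dd = untwist_coset_dec_closed[OF assms(1,3) d(2), folded \<gamma>_def]
    have e: "\<phi> q (fst (coset_dec \<gamma>), ()) \<in> free_on (gens0 (n-m) (Suc q))"
      using assms(2) dd unfolding contraction_def by auto
    show ?thesis unfolding d(1) lin_ext_diff lin_ext_gen transported_gen g' \<gamma>_def[symmetric]
      coset_dec_right_mult[OF mn \<gamma>c one_closed d(3)] using dd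
      apply (simp add: induce_def lin_ext_linear_comb)
      by (rule lin_ext_ctil_rels) (use d in \<open>auto dest!: keys_free_gens0[OF _ e] intro!: relV_dsum_Gm\<close>)
  qed
qed

lemma transported_rels: assumes "m + q \<le> n" "contraction (n-m) \<phi> q" "y \<in> relV q"
  shows "lin_ext (transported \<phi> q) y \<in> relV (Suc q)"
  using assms(3) unfolding ctil_rels_def[of G s "homW_gens G m" _ _ n q]
proof (rule lin_ext_ctil_rels_map[rotated])
  fix y assume "y \<in> {gen (M n g (s (n-q) q t (I q)), x) - gen (g, homW_act G (n-q) t x) | g t x.
       q \<le> n \<and> g \<in> C n \<and> t \<in> C (n-q) \<and> x \<in> homW_gens G m (n-q)} \<union>
     {lin_ext (\<lambda>x. gen (g, x)) k | g k. q \<le> n \<and> g \<in> C n \<and> k \<in> homW_rels G s sm actW m (n-q)}"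
  then consider (S1) g t f w where "y = gen (M n g (s (n-q) q t (I q)), (f, w)) - gen (g, homW_act G (n-q) t (f, w))"
      "g \<in> C n" "t \<in> C (n-q)" "f \<in> C (n-q)"
    | (S2) g k where "y = lin_ext (\<lambda>x. gen (g, x)) k" "g \<in> C n" "k \<in> homW_rels G s sm actW m (n-q)"
    by (auto simp: homW_gens_def)
  then show "lin_ext (transported \<phi> q) y \<in> relV (Suc q)"
  proof cases
    case S1
    have "untwist q (M n g (s (n-q) q t (I q))) f = untwist q g (M (n-q) t f)"
      using untwist_stab[OF assms(1) S1(2,3,4)] stab_eq_place[OF S1(3)] assms by simp
    then show ?thesis unfolding S1(1) lin_ext_diff lin_ext_gen homW_act_def using transported_gen by simp
  next
    case S2
    show ?thesis unfolding S2(1) lin_ext_comp using transported_homW_rel[OF assms(1,2) S2(2,3)] by simp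
  qed
qed

definition transported_below :: "(nat \<Rightarrow> 'g \<times> unit \<Rightarrow> ('g \<times> unit \<Rightarrow>\<^sub>0 'r)) \<Rightarrow> nat \<Rightarrow> ('g \<times> ('g \<times> 'w) \<Rightarrow>\<^sub>0 'r) \<Rightarrow> ('g \<times> ('g \<times> 'w) \<Rightarrow>\<^sub>0 'r)" where
  "transported_below \<phi> q u = (if q = 0 then 0 else lin_ext (transported \<phi> (q-1)) u)"

lemma induce_lin_ext: "induce q \<alpha> h w e = lin_ext (\<lambda>a. induce q \<alpha> h w (gen a)) e"
  unfolding induce_def by (rule lin_ext_cong) simp

lemma induce_add: "induce q \<alpha> h w (x + y) = induce q \<alpha> h w x + induce q \<alpha> h w y"
  unfolding induce_def by (rule lin_ext_add)
lemma induce_diff: "induce q \<alpha> h w (x - y) = induce q \<alpha> h w x - induce q \<alpha> h w y"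
  unfolding induce_def by (rule lin_ext_diff)

lemma induce_chain_map: assumes "m + Suc q \<le> n" "\<alpha> \<in> C n" "h \<in> C m" "e \<in> free_on (gens0 (n-m) (Suc q))"
  shows "dV (Suc q) (induce (Suc q) \<alpha> h w e) - induce q \<alpha> h w (d0 (n-m) (Suc q) e) \<in> relV q"
proof -
  have "dV (Suc q) (induce (Suc q) \<alpha> h w e) - induce q \<alpha> h w (d0 (n-m) (Suc q) e) =
     lin_ext (\<lambda>a. dV (Suc q) (induce (Suc q) \<alpha> h w (gen a)) - induce q \<alpha> h w (d0 (n-m) (Suc q) (gen a))) e"
  proof -
    have 1: "dV (Suc q) (induce (Suc q) \<alpha> h w e) = lin_ext (\<lambda>a. dV (Suc q) (induce (Suc q) \<alpha> h w (gen a))) e"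
      apply (subst induce_lin_ext) unfolding ctil_d_def[of G s b "homW_iota G s b" n] by (rule lin_ext_comp)
    have 2: "induce q \<alpha> h w (d0 (n-m) (Suc q) e) = lin_ext (\<lambda>a. induce q \<alpha> h w (d0 (n-m) (Suc q) (gen a))) e"
      apply (subst ctil_d_lin_ext) unfolding induce_def by (rule lin_ext_comp)
    show ?thesis unfolding 1 2 lin_ext_linear_comb ..
  qed
  also have "\<dots> \<in> relV q"
  proof (rule lin_ext_ctil_rels)
    fix a assume "a \<in> Poly_Mapping.keys e"
    from keys_free_gens0[OF this assms(4)] obtain v where v: "a = (v, ())" "v \<in> C (n-m)" "Suc q \<le> n - m" by blast
    show "dV (Suc q) (induce (Suc q) \<alpha> h w (gen a)) - induce q \<alpha> h w (d0 (n-m) (Suc q) (gen a)) \<in> relV q"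
      using induce_d_gen[of "Suc q" \<alpha> h v w] assms v by simp
  qed
  finally show ?thesis .
qed

lemma transported_homotopy_gen: assumes "(g, (f, w)) \<in> gensV q" "contraction (n-m) \<phi> q" "q \<noteq> 0 \<Longrightarrow> contraction (n-m) \<phi> (q-1)"
  shows "dV (Suc q) (transported \<phi> q (g, (f, w))) + transported_below \<phi> q (dV q (gen (g, (f, w)))) - gen (g, (f, w)) \<in> relV q"
proof -
  have a: "m + q \<le> n" "g \<in> C n" "f \<in> C (n-q)" using assms(1) by auto
  have mn: "m \<le> n" using a by simp
  define \<gamma> where "\<gamma> = untwist q g f"
  have \<gamma>c: "\<gamma> \<in> C n" unfolding \<gamma>_def using a by auto
  define \<alpha> where "\<alpha> = coset_rep \<gamma>"
  define v where "v = fst (coset_dec \<gamma>)"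
  define h where "h = snd (coset_dec \<gamma>)"
  have d: "v \<in> C (n-m)" "h \<in> C m" "\<alpha> \<in> C n"
    using coset_dec_props[OF mn \<gamma>c] coset_rep_props[OF mn \<gamma>c] unfolding v_def h_def \<alpha>_def by auto
  define e where "e = \<phi> q (v, ())"
  have ef: "e \<in> free_on (gens0 (n-m) (Suc q))" using assms(2) d unfolding contraction_def e_def by auto
  have hp3: "d0 (n-m) (Suc q) e + contr_below \<phi> q (d0 (n-m) q (gen (v, ()))) - gen (v, ()) \<in> rel0 (n-m) q"
    using assms(2) d unfolding contraction_def e_def by auto
  have A: "dV (Suc q) (induce (Suc q) \<alpha> h w e) - induce q \<alpha> h w (d0 (n-m) (Suc q) e) \<in> relV q"
  proof (cases "Suc q \<le> n - m")
    case True
    then show ?thesis by (intro induce_chain_map) (use d ef a in auto)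
  next
    case False
    then have "gens0 (n-m) (Suc q) = {}" by (auto simp: ctil_gens_def)
    then have "e = 0" using ef free_on_empty by simp
    then show ?thesis by (simp add: induce_def)
  qed
  have B: "transported_below \<phi> q (dV q (gen (g, (f, w)))) = induce q \<alpha> h w (contr_below \<phi> q (d0 (n-m) q (gen (v, ()))))"
  proof (cases "q = 0")
    case False
    then show ?thesis unfolding transported_below_def contr_below_def \<alpha>_def h_def v_def \<gamma>_def
      using transported_d[OF a(1) _ a(2,3) assms(3)] by simp
  qed (simp add: transported_below_def contr_below_def induce_def)
  have C: "gen (g, (f, w)) - induce q \<alpha> h w (gen (v, ())) \<in> relV q"
    using gen_eq_induce[OF a] unfolding \<alpha>_def h_def v_def \<gamma>_def .
  have D: "induce q \<alpha> h w (d0 (n-m) (Suc q) e + contr_below \<phi> q (d0 (n-m) q (gen (v, ()))) - gen (v, ())) \<in> relV q"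
    by (rule induce_rels[OF a(1) d(3,2) hp3])
  have P: "transported \<phi> q (g, (f, w)) = induce (Suc q) \<alpha> h w e"
    unfolding transported_gen \<gamma>_def[symmetric] \<alpha>_def h_def e_def v_def ..
  have "dV (Suc q) (transported \<phi> q (g, (f, w))) + transported_below \<phi> q (dV q (gen (g, (f, w)))) - gen (g, (f, w)) =
    (dV (Suc q) (induce (Suc q) \<alpha> h w e) - induce q \<alpha> h w (d0 (n-m) (Suc q) e)) +
    induce q \<alpha> h w (d0 (n-m) (Suc q) e + contr_below \<phi> q (d0 (n-m) q (gen (v, ()))) - gen (v, ())) -
    (gen (g, (f, w)) - induce q \<alpha> h w (gen (v, ())))"
    unfolding P B induce_add induce_diff by (simp add: algebra_simps)
  also have "\<dots> \<in> relV q" by (intro ctil_rels_diff ctil_rels_add A D C)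
  finally show ?thesis .
qed

lemma transported_homotopy: assumes "x \<in> free_on (gensV q)" "contraction (n-m) \<phi> q" "q \<noteq> 0 \<Longrightarrow> contraction (n-m) \<phi> (q-1)"
  shows "dV (Suc q) (lin_ext (transported \<phi> q) x) + transported_below \<phi> q (dV q x) - x \<in> relV q"
proof -
  have "dV (Suc q) (lin_ext (transported \<phi> q) x) + transported_below \<phi> q (dV q x) - x =
    lin_ext (\<lambda>a. dV (Suc q) (transported \<phi> q a) + transported_below \<phi> q (dV q (gen a)) - gen a) x"
  proof -
    have e1: "dV (Suc q) (lin_ext (transported \<phi> q) x) = lin_ext (\<lambda>a. dV (Suc q) (transported \<phi> q a)) x"
      unfolding ctil_d_def by (rule lin_ext_comp)
    have e2: "transported_below \<phi> q (dV q x) = lin_ext (\<lambda>a. transported_below \<phi> q (dV q (gen a))) x"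
      apply (subst ctil_d_lin_ext)
      unfolding transported_below_def by (cases "q=0") (simp_all add: lin_ext_def[of "\<lambda>a. 0"] lin_ext_comp)
    have e3: "lin_ext (\<lambda>a. dV (Suc q) (transported \<phi> q a) + transported_below \<phi> q (dV q (gen a)) - gen a) x
       = lin_ext (\<lambda>a. dV (Suc q) (transported \<phi> q a) + transported_below \<phi> q (dV q (gen a))) x - lin_ext gen x"
      by (simp only: lin_ext_linear_comb)
    show ?thesis unfolding e1 e2 e3 lin_ext_gen_id lin_ext_linear_comb(1) ..
  qed
  also have "\<dots> \<in> relV q"
  proof (rule lin_ext_ctil_rels)
    fix a assume "a \<in> Poly_Mapping.keys x"
    then have ag: "a \<in> gensV q" using assms(1) by (auto dest: free_on_keys)
    obtain g f w where a: "a = (g, (f, w))" by (cases a) auto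
    show "dV (Suc q) (transported \<phi> q a) + transported_below \<phi> q (dV q (gen a)) - gen a \<in> relV q"
      unfolding a by (rule transported_homotopy_gen) (use ag a assms in auto)
  qed
  finally show ?thesis .
qed

lemma homW_cycle_boundary: fixes \<phi> :: "nat \<Rightarrow> 'g \<times> unit \<Rightarrow> ('g \<times> unit \<Rightarrow>\<^sub>0 'r)"
  assumes "m + L \<le> n" "\<forall>j\<le>L. contraction (n-m) \<phi> j" "x \<in> free_on (gensV L)"
  "L = 0 \<or> dV L x \<in> relV (L-1)"
  shows "\<exists>y\<in>free_on (gensV (Suc L)). x - dV (Suc L) y \<in> relV L"
proof
  let ?y = "lin_ext (transported \<phi> L) x"
  show "?y \<in> free_on (gensV (Suc L))"
  proof (rule free_on_lin_ext)
    fix a assume "a \<in> Poly_Mapping.keys x"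
    then have ag: "a \<in> gensV L" using assms(3) by (auto dest: free_on_keys)
    obtain g f w where a: "a = (g, (f, w))" by (cases a) auto
    show "transported \<phi> L a \<in> free_on (gensV (Suc L))" unfolding a by (rule transported_free) (use ag a assms in auto)
  qed
  have P: "dV (Suc L) ?y + transported_below \<phi> L (dV L x) - x \<in> relV L"
    by (rule transported_homotopy) (use assms in auto)
  have H: "transported_below \<phi> L (dV L x) \<in> relV L"
  proof (cases "L = 0")
    case False
    then have "lin_ext (transported \<phi> (L-1)) (dV L x) \<in> relV (Suc (L-1))"
      by (intro transported_rels) (use assms in auto)
    then show ?thesis using False unfolding transported_below_def by simp
  qed (simp add: transported_below_def)
  have "x - dV (Suc L) ?y = transported_below \<phi> L (dV L x) - (dV (Suc L) ?y + transported_below \<phi> L (dV L x) - x)"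
    by (simp add: algebra_simps)
  also have "\<dots> \<in> relV L" by (rule ctil_rels_diff[OF H P])
  finally show "x - dV (Suc L) ?y \<in> relV L" .
qed

lemma homW_H_vanishes:
  assumes "m + nat (i+1) \<le> n \<Longrightarrow> \<forall>j\<le>nat (i+1). ctil_H_vanishes G s b (\<lambda>j. UNIV :: unit set)
      (\<lambda>j. {} :: (unit \<Rightarrow>\<^sub>0 'r) set) (\<lambda>j t x. x) (\<lambda>j x. x) (int j - 1) (n-m)"
  shows "ctil_H_vanishes G s b (homW_gens G m) (homW_rels G s sm actW m) (homW_act G) (homW_iota G s b) i n"
  unfolding ctil_H_vanishes_def
proof (intro ballI impI)
  let ?L = "nat (i+1)"
  fix x assume x: "x \<in> free_on (gensV ?L)" and cyc: "?L = 0 \<or> dV ?L x \<in> relV (?L-1)"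
  show "\<exists>y\<in>free_on (gensV (Suc ?L)). x - dV (Suc ?L) y \<in> relV ?L"
  proof (cases "m + ?L \<le> n")
    case False
    then have "gensV ?L = {}" by (auto simp: ctil_gens_def homW_gens_def)
    then have "x = 0" using x free_on_empty by simp
    then show ?thesis by (intro bexI[of _ 0]) auto
  next
    case True
    have Ln: "?L \<le> n - m" using True by simp
    from contraction_exists[OF Ln assms[OF True]]
    obtain \<phi> :: "nat \<Rightarrow> 'g \<times> unit \<Rightarrow> ('g \<times> unit \<Rightarrow>\<^sub>0 'r)" where "\<forall>j\<le>?L. contraction (n-m) \<phi> j"
      by blast
    then show ?thesis using homW_cycle_boundary[OF True _ x cyc] by blast
  qed
qed

end

theorem corollary5p11:
  fixes G :: "nat \<Rightarrow> 'g monoid" and s :: "nat \<Rightarrow> nat \<Rightarrow> 'g \<Rightarrow> 'g \<Rightarrow> 'g" and b :: "nat \<Rightarrow> nat \<Rightarrow> 'g"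
    and N k a m :: nat
    and sm :: "'r::comm_ring_1 \<Rightarrow> 'w::ab_group_add \<Rightarrow> 'w" and actW :: "'g \<Rightarrow> 'w \<Rightarrow> 'w"
  assumes "braided_stability_groupoid G s b"
    and H3: "\<forall>(i::int) (n::nat). -1 \<le> i \<and> i < int N \<and> int n > int k * i + int a \<longrightarrow>
               ctil_H_vanishes G s b (\<lambda>j. UNIV :: unit set) (\<lambda>j. {} :: (unit \<Rightarrow>\<^sub>0 'r) set)
                 (\<lambda>j t x. x) (\<lambda>j x. x) i n"
    and "RG_module (G m) sm actW"
  shows "\<forall>(i::int) (n::nat). -1 \<le> i \<and> i < int N \<and> int n > int k * i + int a + int m \<longrightarrow>
           ctil_H_vanishes G s b (homW_gens G m) (homW_rels G s sm actW m) (homW_act G)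
             (homW_iota G s b) i n"
proof (intro allI impI)
  fix i :: int and n :: nat
  assume hi: "-1 \<le> i \<and> i < int N \<and> int n > int k * i + int a + int m"
  interpret homW_complex G s b n m sm actW by unfold_locales (rule assms(1))
  show "ctil_H_vanishes G s b (homW_gens G m) (homW_rels G s sm actW m) (homW_act G) (homW_iota G s b) i n"
  proof (rule homW_H_vanishes, intro allI impI)
    fix j assume mn: "m + nat (i+1) \<le> n" and j: "j \<le> nat (i+1)"
    have "int k * (int j - 1) \<le> int k * i" using j hi by (intro mult_left_mono) auto
    then have "-1 \<le> int j - 1 \<and> int j - 1 < int N \<and> int (n-m) > int k * (int j - 1) + int a"
      using hi j mn by auto
    then show "ctil_H_vanishes G s b (\<lambda>j. UNIV :: unit set) (\<lambda>j. {} :: (unit \<Rightarrow>\<^sub>0 'r) set)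
        (\<lambda>j t x. x) (\<lambda>j x. x) (int j - 1) (n-m)" using H3 by blast
  qed
qed

end
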